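(* Let $G$ be an $H(4,3)$-free graph with an even number $m \ge 24$ of edges and without isolated vertices. Then \[ \rho(G)\le \rho'(m), \] where $\rho'(m)$ is the largest real root of $p_m(x)=x^4-mx^2-(m-2)x+\frac{m}{2}-1$. Moreover, equality holds if and only if $G \cong S^{-}_{\frac{m+4}{2},2}$.
   Context: All graphs are finite, simple and undirected; $\rho(G)$ denotes the spectral radius (largest eigenvalue) of the adjacency matrix of $G$. $H(4,3)$ (the "fish graph") is the graph obtained from a $4$-cycle $C_4$ and a triangle $C_3$ by identifying one vertex of the $4$-cycle with one vertex of the triangle (so it has $6$ vertices and $7$ edges). A graph is $H(4,3)$-free if it contains no subgraph (not necessarily induced) isomorphic to $H(4,3)$. For $n\ge 3$, $S_{n,2}=K_2\vee (n-2)K_1$ is the graph consisting of two adjacent vertices $u,v$ together with $n-2$ further vertices each adjacent to exactly $u$ and $v$; $S^{-}_{n,2}$ is the graph obtained from $S_{n,2}$ by deleting one edge joining a vertex of degree $2$ to one of $u,v$. Thus $S^{-}_{\frac{m+4}{2},2}$ has exactly $m$ edges. *)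

theory Defs
  imports Complex_Main
begin

definition simple_graph :: "'a set \<Rightarrow> ('a \<Rightarrow> 'a \<Rightarrow> bool) \<Rightarrow> bool" where
  "simple_graph V E \<longleftrightarrow> finite V \<and>
     (\<forall>u v. E u v \<longrightarrow> u \<in> V \<and> v \<in> V \<and> u \<noteq> v \<and> E v u)"

definition edge_set :: "('a \<Rightarrow> 'a \<Rightarrow> bool) \<Rightarrow> 'a set set" where
  "edge_set E = {{u, v} | u v. E u v}"

definition num_edges :: "('a \<Rightarrow> 'a \<Rightarrow> bool) \<Rightarrow> nat" where
  "num_edges E = card (edge_set E)"

definition no_isolated :: "'a set \<Rightarrow> ('a \<Rightarrow> 'a \<Rightarrow> bool) \<Rightarrow> bool" where
  "no_isolated V E \<longleftrightarrow> (\<forall>v\<in>V. \<exists>u. E v u)"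

definition adj_eigenvalue :: "'a set \<Rightarrow> ('a \<Rightarrow> 'a \<Rightarrow> bool) \<Rightarrow> real \<Rightarrow> bool" where
  "adj_eigenvalue V E lam \<longleftrightarrow> (\<exists>x :: 'a \<Rightarrow> real. (\<exists>v\<in>V. x v \<noteq> 0) \<and>
      (\<forall>v\<in>V. (\<Sum>u\<in>{u\<in>V. E v u}. x u) = lam * x v))"

definition spectral_radius :: "'a set \<Rightarrow> ('a \<Rightarrow> 'a \<Rightarrow> bool) \<Rightarrow> real" where
  "spectral_radius V E = Max {lam. adj_eigenvalue V E lam}"

text \<open>G contains the fish graph H(4,3) as a (not necessarily induced) subgraph:
  a 4-cycle a-b-c-d-a and a triangle a-e-f-a sharing the vertex a, six distinct vertices.\<close>
definition fish_free :: "'a set \<Rightarrow> ('a \<Rightarrow> 'a \<Rightarrow> bool) \<Rightarrow> bool" where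
  "fish_free V E \<longleftrightarrow> \<not> (\<exists>a b c d e f.
      distinct [a, b, c, d, e, f] \<and> {a, b, c, d, e, f} \<subseteq> V \<and>
      E a b \<and> E b c \<and> E c d \<and> E d a \<and> E a e \<and> E e f \<and> E f a)"

definition graph_iso :: "'a set \<Rightarrow> ('a \<Rightarrow> 'a \<Rightarrow> bool) \<Rightarrow> 'b set \<Rightarrow> ('b \<Rightarrow> 'b \<Rightarrow> bool) \<Rightarrow> bool" where
  "graph_iso V E W F \<longleftrightarrow> (\<exists>h. bij_betw h V W \<and> (\<forall>u\<in>V. \<forall>v\<in>V. E u v \<longleftrightarrow> F (h u) (h v)))"

text \<open>S_{n,2}^- on vertices {0..<n}: u = 0, v = 1 adjacent; every vertex w >= 2 adjacent
  to 0 and 1, except that the edge {2,1} is deleted.\<close>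
definition Sminus_V :: "nat \<Rightarrow> nat set" where
  "Sminus_V n = {0..<n}"

definition Sminus_E :: "nat \<Rightarrow> nat \<Rightarrow> nat \<Rightarrow> bool" where
  "Sminus_E n x y \<longleftrightarrow> x < n \<and> y < n \<and>
     ({x, y} = {0, 1} \<or> (\<exists>w. 2 \<le> w \<and> ({x, y} = {0, w} \<or> ({x, y} = {1, w} \<and> w \<noteq> 2))))"

definition p_m :: "nat \<Rightarrow> real \<Rightarrow> real" where
  "p_m m x = x ^ 4 - real m * x ^ 2 - (real m - 2) * x + real m / 2 - 1"

definition rho' :: "nat \<Rightarrow> real" where
  "rho' m = Max {x. p_m m x = 0}"

end

theory Submission
  imports Defs "HOL-Analysis.Function_Topology" "Jordan_Normal_Form.Char_Poly"
begin

text \<open>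
  Let rho be the spectral radius of G and y a nonnegative eigenvector for it, scaled so that its
  largest entry is y u = 1 (Perron--Frobenius, via the Rayleigh quotient). Put A = N(u) and let B
  consist of the vertices outside A other than u. Comparing the walks of length two from u with
  twice the number of edges gives
    m - rho^2 + rho = rho + e(A) - sum_(v in A) d_A(v) y_v + sum_(w in B) d_A(w) (1 - y_w) + e(B). Since
  p_m(x) = (x^2 - x - (m - 3/2)) (x^2 + x - 1/2) - 1/4, the assumption rho >= rho'(m) gives
  rho^2 - rho > m - 3/2, so this excess is less than 3/2.

  In a fish-free graph, G[A] contains no path on three vertices disjoint from a further edge, so
  G[A] is a matching, or a star with at least two leaves plus isolated vertices, or all its edges
  lie within four vertices. The excess bound excludes the first and the last case, and in the
  star case it forces B to be empty and A to contain exactly one isolated vertex; then G is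
  S^-_{(m+4)/2,2}. Conversely p_m is the determinant of the eigenvalue equations of
  S^-_{(m+4)/2,2} at its two centres, so its spectral radius is rho'(m).
\<close>

lemma simple_graph_finite: "simple_graph V E \<Longrightarrow> finite V"
  unfolding simple_graph_def by blast

lemma simple_graph_sym: "simple_graph V E \<Longrightarrow> E v w \<Longrightarrow> E w v"
  unfolding simple_graph_def by blast

lemma simple_graph_irrefl: "simple_graph V E \<Longrightarrow> \<not> E v v"
  unfolding simple_graph_def by blast

lemma simple_graph_edge_in: "simple_graph V E \<Longrightarrow> E v w \<Longrightarrow> v \<in> V \<and> w \<in> V"
  unfolding simple_graph_def by blast

lemma simple_graph_nonempty:
  assumes "simple_graph V E" "num_edges E \<noteq> 0"
  shows "V \<noteq> {}"
proof
  assume "V = {}"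
  then have "edge_set E = {}" using simple_graph_edge_in[OF assms(1)] unfolding edge_set_def by auto
  then show False using assms(2) unfolding num_edges_def by simp
qed

definition neighbours :: "'a set \<Rightarrow> ('a \<Rightarrow> 'a \<Rightarrow> bool) \<Rightarrow> 'a \<Rightarrow> 'a set" where
  "neighbours V E v = {w\<in>V. E v w}"

lemma sum_neighbours: "finite V \<Longrightarrow> (\<Sum>w\<in>neighbours V E v. f w) = (\<Sum>w\<in>V. if E v w then f w else 0)"
  unfolding neighbours_def by (simp add: sum.inter_filter)

lemma neighbours_Int: "T \<subseteq> V \<Longrightarrow> neighbours V E v \<inter> T = {w\<in>T. E v w}"
  unfolding neighbours_def by auto

lemma sum_card_neighbours:
  assumes sg: "simple_graph V E"
  shows "(\<Sum>v\<in>V. card (neighbours V E v)) = 2 * num_edges E"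
proof -
  have fin: "finite V" using simple_graph_finite[OF sg] .
  define P where "P = Sigma V (neighbours V E)"
  define ends :: "'a \<times> 'a \<Rightarrow> 'a set" where "ends = (\<lambda>(a, b). {a, b})"
  have finP: "finite P" unfolding P_def neighbours_def using fin by auto
  have cardP: "card P = (\<Sum>v\<in>V. card (neighbours V E v))"
    unfolding P_def using fin by (subst card_SigmaI) (auto simp: neighbours_def)
  have edges: "edge_set E = ends ` P"
    unfolding edge_set_def P_def ends_def neighbours_def
    by (auto intro!: rev_image_eqI dest: simple_graph_edge_in[OF sg])
  have darts: "{p\<in>P. ends p = {a, b}} = {(a, b), (b, a)}" if "E a b" for a b
    using that simple_graph_edge_in[OF sg] simple_graph_sym[OF sg] simple_graph_irrefl[OF sg]
    unfolding P_def ends_def neighbours_def by (auto simp: doubleton_eq_iff)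
  have "card P = card (\<Union>e\<in>edge_set E. {p\<in>P. ends p = e})"
    unfolding edges by (rule arg_cong[where f = card]) auto
  also have "\<dots> = (\<Sum>e\<in>edge_set E. card {p\<in>P. ends p = e})"
    by (rule card_UN_disjoint) (use finP edges in auto)
  also have "\<dots> = (\<Sum>e\<in>edge_set E. 2)"
  proof (intro sum.cong refl)
    fix e assume "e \<in> edge_set E"
    then obtain a b where ab: "E a b" "e = {a, b}" unfolding edge_set_def by auto
    then have "a \<noteq> b" using simple_graph_irrefl[OF sg] by auto
    then show "card {p\<in>P. ends p = e} = 2" using darts[OF ab(1)] ab(2) by simp
  qed
  finally show ?thesis using cardP unfolding num_edges_def by simp
qed

lemma sum_neighbours_swap:
  assumes sg: "simple_graph V E" and "S \<subseteq> V" "T \<subseteq> V"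
  shows "(\<Sum>v\<in>S. \<Sum>w\<in>neighbours V E v \<inter> T. f w) = (\<Sum>w\<in>T. real (card (neighbours V E w \<inter> S)) * f w)"
proof -
  have fin: "finite S" "finite T" using simple_graph_finite[OF sg] assms finite_subset by auto
  have "(\<Sum>v\<in>S. \<Sum>w\<in>neighbours V E v \<inter> T. f w) = (\<Sum>v\<in>S. \<Sum>w\<in>T. if E v w then f w else 0)"
    unfolding neighbours_Int[OF \<open>T \<subseteq> V\<close>] using fin by (simp add: sum.inter_filter)
  also have "\<dots> = (\<Sum>w\<in>T. \<Sum>v\<in>S. if E w v then f w else 0)"
    by (subst sum.swap) (auto intro!: sum.cong dest: simple_graph_sym[OF sg])
  also have "\<dots> = (\<Sum>w\<in>T. real (card (neighbours V E w \<inter> S)) * f w)"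
    unfolding neighbours_Int[OF \<open>S \<subseteq> V\<close>] using fin by (simp add: sum.inter_filter[symmetric])
  finally show ?thesis .
qed

definition adj_form :: "'a set \<Rightarrow> ('a \<Rightarrow> 'a \<Rightarrow> bool) \<Rightarrow> ('a \<Rightarrow> real) \<Rightarrow> ('a \<Rightarrow> real) \<Rightarrow> real" where
  "adj_form V E x y = (\<Sum>v\<in>V. \<Sum>w\<in>V. if E v w then x v * y w else 0)"

definition sq_norm :: "'a set \<Rightarrow> ('a \<Rightarrow> real) \<Rightarrow> real" where
  "sq_norm V x = (\<Sum>v\<in>V. (x v)\<^sup>2)"

lemma adj_form_add_left: "adj_form V E (\<lambda>v. x v + y v) z = adj_form V E x z + adj_form V E y z"
  unfolding adj_form_def by (simp add: sum.distrib[symmetric] algebra_simps if_distrib cong: if_cong)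

lemma adj_form_add_right: "adj_form V E z (\<lambda>v. x v + y v) = adj_form V E z x + adj_form V E z y"
  unfolding adj_form_def by (simp add: sum.distrib[symmetric] algebra_simps if_distrib cong: if_cong)

lemma adj_form_scale_left: "adj_form V E (\<lambda>v. c * x v) z = c * adj_form V E x z"
  unfolding adj_form_def by (simp add: sum_distrib_left algebra_simps if_distrib cong: if_cong)

lemma adj_form_scale_right: "adj_form V E z (\<lambda>v. c * x v) = c * adj_form V E z x"
  unfolding adj_form_def by (simp add: sum_distrib_left algebra_simps if_distrib cong: if_cong)

lemma adj_form_cong: "(\<And>v. v \<in> V \<Longrightarrow> x v = x' v) \<Longrightarrow> adj_form V E x x = adj_form V E x' x'"
  unfolding adj_form_def by (intro sum.cong) auto

lemma adj_form_commute: "simple_graph V E \<Longrightarrow> adj_form V E x y = adj_form V E y x"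
  unfolding adj_form_def
  by (subst sum.swap) (auto intro!: sum.cong simp: mult.commute dest: simple_graph_sym)

lemma adj_form_indicator_right:
  assumes sg: "simple_graph V E" and "v0 \<in> V"
  shows "adj_form V E x (\<lambda>v. if v = v0 then 1 else 0) = (\<Sum>w\<in>neighbours V E v0. x w)"
proof -
  have fin: "finite V" using simple_graph_finite[OF sg] .
  have "(\<Sum>w\<in>V. if E v w then x v * (if w = v0 then 1 else 0) else 0) = (if E v v0 then x v else 0)"
    for v
  proof -
    have "(\<Sum>w\<in>V. if E v w then x v * (if w = v0 then 1 else 0) else 0)
        = (\<Sum>w\<in>V. if w = v0 then (if E v v0 then x v else 0) else 0)"
      by (intro sum.cong) auto
    then show ?thesis using \<open>v0 \<in> V\<close> fin by simp
  qed
  then have "adj_form V E x (\<lambda>v. if v = v0 then 1 else 0) = (\<Sum>v\<in>V. if E v v0 then x v else 0)"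
    unfolding adj_form_def by simp
  also have "\<dots> = (\<Sum>w\<in>neighbours V E v0. x w)"
    unfolding sum_neighbours[OF fin] by (auto intro!: sum.cong dest: simple_graph_sym[OF sg])
  finally show ?thesis .
qed

lemma adj_form_indicator:
  "simple_graph V E \<Longrightarrow> v0 \<in> V \<Longrightarrow>
     adj_form V E (\<lambda>v. if v = v0 then 1 else 0) (\<lambda>v. if v = v0 then 1 else 0) = 0"
  unfolding adj_form_indicator_right neighbours_def by (rule sum.neutral) (auto simp: simple_graph_irrefl)

lemma sq_norm_scale: "sq_norm V (\<lambda>v. c * y v) = c\<^sup>2 * sq_norm V y"
  unfolding sq_norm_def by (simp add: sum_distrib_left power_mult_distrib)

lemma sq_norm_cong: "(\<And>v. v \<in> V \<Longrightarrow> x v = y v) \<Longrightarrow> sq_norm V x = sq_norm V y"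
  unfolding sq_norm_def by (intro sum.cong) auto

lemma sq_norm_pos: "finite V \<Longrightarrow> v \<in> V \<Longrightarrow> z v \<noteq> 0 \<Longrightarrow> 0 < sq_norm V z"
  unfolding sq_norm_def by (rule sum_pos2[of V v]) auto

lemma sq_norm_eq_0: "finite V \<Longrightarrow> sq_norm V y = 0 \<Longrightarrow> v \<in> V \<Longrightarrow> y v = 0"
  using sq_norm_pos by fastforce

lemma sq_norm_indicator: "finite V \<Longrightarrow> v0 \<in> V \<Longrightarrow> sq_norm V (\<lambda>v. if v = v0 then 1 else 0) = 1"
  unfolding sq_norm_def by (simp add: if_distrib[of "\<lambda>a. a\<^sup>2"] cong: if_cong)

lemma continuous_on_sq_norm: "continuous_on UNIV (sq_norm V)"
  unfolding sq_norm_def by (intro continuous_intros continuous_on_product_coordinates)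

lemma continuous_on_adj_form: "continuous_on UNIV (\<lambda>x. adj_form V E x x)"
  unfolding adj_form_def
proof (intro continuous_on_sum)
  show "continuous_on UNIV (\<lambda>x::_ \<Rightarrow> real. if E v w then x v * x w else 0)" for v w
    by (cases "E v w") (simp_all add: continuous_on_mult)
qed

definition unit_cube :: "'a set \<Rightarrow> ('a \<Rightarrow> real) set" where
  "unit_cube V = PiE UNIV (\<lambda>v. if v \<in> V then {-1..1} else {0})"

lemma compact_unit_cube: "compact (unit_cube V)"
proof -
  have "compactin (product_topology (\<lambda>i. euclidean) UNIV) (unit_cube V)"
    unfolding unit_cube_def by (subst compactin_PiE) (auto simp: compactin_euclidean_iff)
  then show ?thesis by (simp add: euclidean_product_topology compactin_euclidean_iff)
qed

lemma adj_form_normalise: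
  assumes fin: "finite V" and pos: "0 < sq_norm V y"
  obtains y' where "y' \<in> unit_cube V" "sq_norm V y' = 1"
    "adj_form V E y' y' = adj_form V E y y / sq_norm V y"
proof -
  define s where "s = sqrt (sq_norm V y)"
  have s: "s > 0" "s\<^sup>2 = sq_norm V y" using pos by (auto simp: s_def)
  define y' where "y' = (\<lambda>v. if v \<in> V then y v / s else 0)"
  have "\<bar>y v\<bar> \<le> s" if "v \<in> V" for v
  proof -
    have "(y v)\<^sup>2 \<le> sq_norm V y"
      unfolding sq_norm_def using member_le_sum[of v V "\<lambda>v. (y v)\<^sup>2"] that fin by auto
    then show ?thesis unfolding s_def by (simp add: real_le_rsqrt)
  qed
  then have "y' \<in> unit_cube V"
    unfolding y'_def unit_cube_def using s(1) by (force simp: PiE_iff abs_le_iff divide_le_eq le_divide_eq)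
  moreover have "sq_norm V y' = (1/s)\<^sup>2 * sq_norm V y"
    by (subst sq_norm_scale[symmetric], rule sq_norm_cong) (simp add: y'_def)
  moreover have "adj_form V E y' y' = adj_form V E (\<lambda>v. (1/s) * y v) (\<lambda>v. (1/s) * y v)"
    by (rule adj_form_cong) (simp add: y'_def)
  then have "adj_form V E y' y' = (1/s)\<^sup>2 * adj_form V E y y"
    by (simp only: adj_form_scale_left adj_form_scale_right) (simp add: power2_eq_square)
  ultimately show ?thesis using that s pos by (simp add: power_divide)
qed

lemma adj_form_attains_max:
  assumes fin: "finite V" and ne: "V \<noteq> {}"
  obtains x where "sq_norm V x = 1" "\<And>y. adj_form V E y y \<le> adj_form V E x x * sq_norm V y"
proof -
  define K where "K = unit_cube V \<inter> {x. sq_norm V x = 1}"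
  have cK: "compact K" unfolding K_def
    by (intro compact_Int_closed compact_unit_cube closed_Collect_eq continuous_on_sq_norm continuous_on_const)
  obtain v0 where v0: "v0 \<in> V" using ne by auto
  have "(\<lambda>v. if v = v0 then 1 else 0) \<in> K"
    using sq_norm_indicator[OF fin v0] v0 unfolding K_def unit_cube_def by (simp add: PiE_iff)
  then have neK: "K \<noteq> {}" by auto
  obtain x where xK: "x \<in> K" and xmax: "\<forall>y\<in>K. adj_form V E y y \<le> adj_form V E x x"
    using continuous_attains_sup[OF cK neK continuous_on_subset[OF continuous_on_adj_form]] by blast
  have "adj_form V E y y \<le> adj_form V E x x * sq_norm V y" for y
  proof (cases "sq_norm V y = 0")
    case True
    then have "adj_form V E y y = 0"
      unfolding adj_form_def using sq_norm_eq_0[OF fin True] by (intro sum.neutral ballI) simp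
    then show ?thesis using True by simp
  next
    case False
    then have pos: "sq_norm V y > 0" unfolding sq_norm_def by (simp add: sum_nonneg order_le_neq_trans)
    obtain y' where "y' \<in> K" "adj_form V E y' y' = adj_form V E y y / sq_norm V y"
      using adj_form_normalise[OF fin pos, of E] unfolding K_def by blast
    then have "adj_form V E y y / sq_norm V y \<le> adj_form V E x x" using xmax by auto
    then show ?thesis using pos by (simp add: divide_le_eq)
  qed
  moreover have "sq_norm V x = 1" using xK unfolding K_def by auto
  ultimately show ?thesis using that by blast
qed

lemma linear_le_quadratic_imp_zero:
  fixes g M :: real
  assumes "\<And>t. 2 * t * g \<le> M * t\<^sup>2"
  shows "g = 0"
proof -
  define c where "c = \<bar>M\<bar> + 1"
  have c: "c > 0" "2 * c - M > 0" unfolding c_def by auto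
  have "2 * (g / c) * g \<le> M * (g / c)\<^sup>2" by (rule assms)
  then have "2 * c * g\<^sup>2 \<le> M * g\<^sup>2" using c by (simp add: power2_eq_square field_simps)
  then have "(2 * c - M) * g\<^sup>2 \<le> 0" by (simp add: algebra_simps)
  then show "g = 0" using c by (simp add: mult_le_0_iff)
qed

text \<open>First-order condition at a maximiser of the Rayleigh quotient, tested in the
  direction of a single vertex.\<close>
lemma adj_form_maximiser_eigen:
  assumes sg: "simple_graph V E" and max: "\<And>y. adj_form V E y y \<le> M * sq_norm V y"
    and eq: "adj_form V E x x = M * sq_norm V x" and v0: "v0 \<in> V"
  shows "(\<Sum>w\<in>neighbours V E v0. x w) = M * x v0"
proof -
  have fin: "finite V" using simple_graph_finite[OF sg] .
  define d where "d = (\<lambda>v. if v = v0 then 1 else (0::real))"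
  define S where "S = (\<Sum>w\<in>neighbours V E v0. x w)"
  have "2 * t * (S - M * x v0) \<le> M * t\<^sup>2" for t
  proof -
    have "adj_form V E (\<lambda>v. x v + t * d v) (\<lambda>v. x v + t * d v)
        = adj_form V E x x + 2 * t * adj_form V E x d + t\<^sup>2 * adj_form V E d d"
      unfolding adj_form_add_left adj_form_add_right adj_form_scale_left adj_form_scale_right
      using adj_form_commute[OF sg, of d x] by (simp add: power2_eq_square algebra_simps)
    also have "\<dots> = adj_form V E x x + 2 * t * S"
      unfolding d_def S_def adj_form_indicator[OF sg v0] adj_form_indicator_right[OF sg v0] by simp
    finally have form: "adj_form V E (\<lambda>v. x v + t * d v) (\<lambda>v. x v + t * d v) = adj_form V E x x + 2 * t * S" .
    have "sq_norm V (\<lambda>v. x v + t * d v) = (\<Sum>v\<in>V. (x v)\<^sup>2 + (2 * t * x v + t\<^sup>2) * d v)"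
      unfolding sq_norm_def d_def by (intro sum.cong refl) (simp add: power2_eq_square algebra_simps)
    also have "\<dots> = sq_norm V x + (2 * t * x v0 + t\<^sup>2)"
      unfolding sq_norm_def sum.distrib d_def using v0 fin
      by (simp add: if_distrib[of "\<lambda>a. _ * a"] cong: if_cong)
    finally have "sq_norm V (\<lambda>v. x v + t * d v) = sq_norm V x + (2 * t * x v0 + t\<^sup>2)" .
    then show ?thesis using max[of "\<lambda>v. x v + t * d v"] unfolding form eq by (simp add: algebra_simps)
  qed
  then show ?thesis unfolding S_def using linear_le_quadratic_imp_zero by fastforce
qed

lemma adj_form_eigenvector:
  assumes sg: "simple_graph V E" and ev: "\<forall>v\<in>V. (\<Sum>w\<in>neighbours V E v. z w) = lam * z v"
  shows "adj_form V E z z = lam * sq_norm V z"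
proof -
  have fin: "finite V" using simple_graph_finite[OF sg] .
  have "adj_form V E z z = (\<Sum>v\<in>V. z v * (\<Sum>w\<in>neighbours V E v. z w))"
    unfolding adj_form_def sum_neighbours[OF fin] by (simp add: sum_distrib_left if_distrib cong: if_cong)
  also have "\<dots> = lam * sq_norm V z"
    unfolding sq_norm_def using ev by (simp add: sum_distrib_left power2_eq_square algebra_simps)
  finally show ?thesis .
qed

lemma adj_eigenvalue_le_max:
  assumes sg: "simple_graph V E" and max: "\<And>y. adj_form V E y y \<le> M * sq_norm V y"
    and "adj_eigenvalue V E lam"
  shows "lam \<le> M"
proof -
  obtain z v where "v \<in> V" "z v \<noteq> 0" and ev: "\<forall>v\<in>V. (\<Sum>w\<in>neighbours V E v. z w) = lam * z v"
    using assms(3) unfolding adj_eigenvalue_def neighbours_def by blast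
  then have "0 < sq_norm V z" using sq_norm_pos[OF simple_graph_finite[OF sg]] by blast
  then show ?thesis using max[of z] adj_form_eigenvector[OF sg ev] by simp
qed

definition adj_mat :: "nat \<Rightarrow> (nat \<Rightarrow> 'a) \<Rightarrow> ('a \<Rightarrow> 'a \<Rightarrow> bool) \<Rightarrow> real mat" where
  "adj_mat n f E = mat n n (\<lambda>(i, j). if E (f i) (f j) then 1 else 0)"

lemma eigenvalue_adj_mat:
  assumes fin: "finite V" and f: "bij_betw f {0..<n} V" and ev: "adj_eigenvalue V E lam"
  shows "eigenvalue (adj_mat n f E) lam"
proof -
  obtain z where z: "\<exists>v\<in>V. z v \<noteq> 0" "\<forall>v\<in>V. (\<Sum>u\<in>neighbours V E v. z u) = lam * z v"
    using ev unfolding adj_eigenvalue_def neighbours_def by blast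
  define w where "w = vec n (\<lambda>i. z (f i))"
  have w: "w \<in> carrier_vec n" unfolding w_def by simp
  have "w \<noteq> 0\<^sub>v n"
  proof
    assume w0: "w = 0\<^sub>v n"
    obtain v where v: "v \<in> V" "z v \<noteq> 0" using z(1) by blast
    then obtain i where i: "i < n" "f i = v" using f unfolding bij_betw_def by auto
    have "w $ i = 0" using w0 i by simp
    then show False using i v unfolding w_def by simp
  qed
  moreover have "adj_mat n f E *\<^sub>v w = lam \<cdot>\<^sub>v w"
  proof (rule eq_vecI)
    fix i assume "i < dim_vec (lam \<cdot>\<^sub>v w)"
    then have i: "i < n" using w by simp
    have "(adj_mat n f E *\<^sub>v w) $ i = (\<Sum>j\<in>{0..<n}. (if E (f i) (f j) then 1 else 0) * z (f j))"
      using i unfolding adj_mat_def w_def by (simp add: mult_mat_vec_def scalar_prod_def)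
    also have "\<dots> = (\<Sum>u\<in>V. (if E (f i) u then 1 else 0) * z u)"
      by (rule sum.reindex_bij_betw[OF f, of "\<lambda>u. (if E (f i) u then 1 else 0) * z u"])
    also have "\<dots> = (\<Sum>u\<in>neighbours V E (f i). z u)"
      unfolding sum_neighbours[OF fin] by (intro sum.cong) auto
    also have "\<dots> = lam * z (f i)" using z(2) f i unfolding bij_betw_def by auto
    finally show "(adj_mat n f E *\<^sub>v w) $ i = (lam \<cdot>\<^sub>v w) $ i" using i unfolding w_def by simp
  qed (use w in \<open>simp add: adj_mat_def\<close>)
  ultimately show ?thesis unfolding eigenvalue_def eigenvector_def adj_mat_def using w by auto
qed

lemma finite_adj_eigenvalues:
  assumes "simple_graph V E"
  shows "finite {lam. adj_eigenvalue V E lam}"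
proof -
  have fin: "finite V" using simple_graph_finite[OF assms] .
  obtain f where f: "bij_betw f {0..<card V} V" using ex_bij_betw_nat_finite[OF fin] by blast
  have A: "adj_mat (card V) f E \<in> carrier_mat (card V) (card V)" unfolding adj_mat_def by simp
  have "{lam. adj_eigenvalue V E lam} \<subseteq> {k. poly (char_poly (adj_mat (card V) f E)) k = 0}"
    using eigenvalue_adj_mat[OF fin f] eigenvalue_root_char_poly[OF A] by blast
  moreover have "char_poly (adj_mat (card V) f E) \<noteq> 0" using degree_monic_char_poly[OF A] by auto
  ultimately show ?thesis using poly_roots_finite finite_subset by blast
qed

lemma spectral_radius_eqI:
  assumes "simple_graph V E" "adj_eigenvalue V E M" "\<And>lam. adj_eigenvalue V E lam \<Longrightarrow> lam \<le> M"
  shows "spectral_radius V E = M"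
  unfolding spectral_radius_def using assms by (intro Max_eqI finite_adj_eigenvalues) auto

text \<open>Perron--Frobenius: taking absolute values does not decrease the quadratic form, so the
  Rayleigh quotient has a nonnegative maximiser.\<close>
lemma spectral_radius_nonneg_eigenvector:
  assumes sg: "simple_graph V E" and ne: "V \<noteq> {}"
  obtains x where "\<forall>v\<in>V. 0 \<le> x v" "\<exists>v\<in>V. x v \<noteq> 0"
    "\<forall>v\<in>V. (\<Sum>w\<in>neighbours V E v. x w) = spectral_radius V E * x v"
proof -
  have fin: "finite V" using simple_graph_finite[OF sg] .
  obtain x0 where n1: "sq_norm V x0 = 1" and max: "\<And>y. adj_form V E y y \<le> adj_form V E x0 x0 * sq_norm V y"
    using adj_form_attains_max[OF fin ne] by blast
  define M where "M = adj_form V E x0 x0"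
  define x where "x = (\<lambda>v. \<bar>x0 v\<bar>)"
  have nx: "sq_norm V x = 1" using n1 unfolding sq_norm_def x_def by simp
  have "M \<le> adj_form V E x x" unfolding M_def adj_form_def x_def
    by (intro sum_mono) (auto simp: abs_mult[symmetric])
  then have "adj_form V E x x = M * sq_norm V x" using max[of x] nx unfolding M_def by simp
  then have eig: "\<forall>v\<in>V. (\<Sum>w\<in>neighbours V E v. x w) = M * x v"
    using adj_form_maximiser_eigen[OF sg max[folded M_def]] by blast
  have nz: "\<exists>v\<in>V. x v \<noteq> 0"
  proof (rule ccontr)
    assume "\<not> ?thesis"
    then have "sq_norm V x = 0" unfolding sq_norm_def by simp
    then show False using nx by simp
  qed
  have "adj_eigenvalue V E M" using eig nz unfolding adj_eigenvalue_def neighbours_def by blast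
  then have "spectral_radius V E = M"
    using adj_eigenvalue_le_max[OF sg max[folded M_def]] by (intro spectral_radius_eqI[OF sg])
  then show ?thesis using eig nz by (intro that[of x]) (auto simp: x_def)
qed

lemma spectral_radius_normalised_eigenvector:
  assumes sg: "simple_graph V E" and ne: "V \<noteq> {}"
  obtains u y where "u \<in> V" "y u = 1" "\<forall>v\<in>V. 0 \<le> y v \<and> y v \<le> 1"
    "\<forall>v\<in>V. (\<Sum>w\<in>neighbours V E v. y w) = spectral_radius V E * y v"
proof -
  obtain x where nn: "\<forall>v\<in>V. 0 \<le> x v" and nz: "\<exists>v\<in>V. x v \<noteq> 0"
    and eig: "\<forall>v\<in>V. (\<Sum>w\<in>neighbours V E v. x w) = spectral_radius V E * x v"
    using spectral_radius_nonneg_eigenvector[OF sg ne] by blast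
  have fin: "finite V" using simple_graph_finite[OF sg] .
  have "Max (x ` V) \<in> x ` V" using fin ne by (intro Max_in) auto
  then obtain u where u: "u \<in> V" "x u = Max (x ` V)" by auto
  then have xmax: "x v \<le> x u" if "v \<in> V" for v using fin that by simp
  obtain v0 where v0: "v0 \<in> V" "x v0 \<noteq> 0" using nz by blast
  have xu: "x u > 0" using xmax[OF v0(1)] nn v0 by force
  define y where "y = (\<lambda>v. x v / x u)"
  show ?thesis
  proof (rule that[of u y])
    show "\<forall>v\<in>V. (\<Sum>w\<in>neighbours V E v. y w) = spectral_radius V E * y v"
      unfolding y_def using eig by (simp add: sum_divide_distrib[symmetric])
    show "\<forall>v\<in>V. 0 \<le> y v \<and> y v \<le> 1" unfolding y_def using nn xmax xu by simp
  qed (use u xu in \<open>auto simp: y_def\<close>)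
qed

lemma graph_iso_sym:
  assumes "graph_iso V E W F" shows "graph_iso W F V E"
proof -
  obtain h where h: "bij_betw h V W" "\<forall>u\<in>V. \<forall>v\<in>V. E u v \<longleftrightarrow> F (h u) (h v)"
    using assms unfolding graph_iso_def by blast
  define h' where "h' = inv_into V h"
  have b: "bij_betw h' W V" unfolding h'_def by (rule bij_betw_inv_into[OF h(1)])
  have "\<forall>u\<in>W. \<forall>v\<in>W. F u v \<longleftrightarrow> E (h' u) (h' v)"
  proof (intro ballI)
    fix u v assume uv: "u \<in> W" "v \<in> W"
    have "h (h' u) = u" "h (h' v) = v" unfolding h'_def using uv h(1)
      by (auto simp: bij_betw_inv_into_right)
    moreover have "h' u \<in> V" "h' v \<in> V" using b uv by (auto dest: bij_betwE)
    ultimately show "F u v \<longleftrightarrow> E (h' u) (h' v)" using h(2) by metis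
  qed
  then show ?thesis unfolding graph_iso_def using b by blast
qed

lemma image_neighbours_graph_iso:
  assumes h: "bij_betw h V W" "\<forall>u\<in>V. \<forall>v\<in>V. E u v \<longleftrightarrow> F (h u) (h v)" and v: "v \<in> V"
  shows "h ` neighbours V E v = neighbours W F (h v)"
proof
  show "h ` neighbours V E v \<subseteq> neighbours W F (h v)"
    using h v unfolding neighbours_def by (auto dest: bij_betwE)
  show "neighbours W F (h v) \<subseteq> h ` neighbours V E v"
  proof
    fix w assume w: "w \<in> neighbours W F (h v)"
    then obtain u where "u \<in> V" "w = h u" using h(1) unfolding bij_betw_def neighbours_def by auto
    then show "w \<in> h ` neighbours V E v" using w h(2) v unfolding neighbours_def by auto
  qed
qed

lemma adj_eigenvalue_graph_iso:
  assumes "graph_iso V E W F" "adj_eigenvalue W F lam" shows "adj_eigenvalue V E lam"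
proof -
  obtain h where h: "bij_betw h V W" "\<forall>u\<in>V. \<forall>v\<in>V. E u v \<longleftrightarrow> F (h u) (h v)"
    using assms unfolding graph_iso_def by blast
  obtain z where z: "\<exists>v\<in>W. z v \<noteq> 0" "\<forall>v\<in>W. (\<Sum>u\<in>neighbours W F v. z u) = lam * z v"
    using assms(2) unfolding adj_eigenvalue_def neighbours_def by blast
  have "(\<Sum>u\<in>neighbours V E v. z (h u)) = lam * z (h v)" if v: "v \<in> V" for v
  proof -
    have "inj_on h (neighbours V E v)"
      using bij_betw_imp_inj_on[OF h(1)] by (rule inj_on_subset) (auto simp: neighbours_def)
    then have "(\<Sum>u\<in>neighbours V E v. z (h u)) = (\<Sum>u\<in>h ` neighbours V E v. z u)"
      by (simp add: sum.reindex)
    also have "\<dots> = lam * z (h v)"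
      unfolding image_neighbours_graph_iso[OF h v] using z(2) bij_betwE[OF h(1)] v by blast
    finally show ?thesis .
  qed
  moreover have "\<exists>v\<in>V. z (h v) \<noteq> 0" using z(1) h(1) unfolding bij_betw_def by auto
  ultimately show ?thesis unfolding adj_eigenvalue_def neighbours_def by (intro exI[of _ "z \<circ> h"]) simp
qed

lemma spectral_radius_graph_iso: "graph_iso V E W F \<Longrightarrow> spectral_radius V E = spectral_radius W F"
proof -
  assume a: "graph_iso V E W F"
  have "{lam. adj_eigenvalue V E lam} = {lam. adj_eigenvalue W F lam}"
    using adj_eigenvalue_graph_iso[OF a] adj_eigenvalue_graph_iso[OF graph_iso_sym[OF a]] by blast
  then show ?thesis unfolding spectral_radius_def by simp
qed

lemma p_m_factor: "p_m m x = (x\<^sup>2 - x - (real m - 3/2)) * (x\<^sup>2 + x - 1/2) - 1/4"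
  unfolding p_m_def by (simp add: field_simps power2_eq_square power4_eq_xxxx)

lemma finite_p_m_roots: "finite {x. p_m m x = 0}"
proof -
  have "p_m m = poly [:real m/2 - 1, -(real m - 2), - real m, 0, 1:]"
    unfolding p_m_def by (simp add: fun_eq_iff algebra_simps power2_eq_square power4_eq_xxxx)
  then show ?thesis using poly_roots_finite[of "[:real m/2 - 1, -(real m - 2), - real m, 0, 1:]"] by simp
qed

lemma root_le_rho': "p_m m x = 0 \<Longrightarrow> x \<le> rho' m"
  unfolding rho'_def by (rule Max_ge[OF finite_p_m_roots]) simp

text \<open>p_m changes sign on [1, m].\<close>
lemma p_m_root_gt_1:
  assumes "2 \<le> m"
  obtains r where "1 < r" "p_m m r = 0"
proof -
  have m: "real m \<ge> 2" using assms by simp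
  have p1: "p_m m 1 < 0" unfolding p_m_def using m by simp
  have "p_m m (real m) = real m ^ 4 - real m ^ 3 - real m * (real m - 2) + real m / 2 - 1"
    unfolding p_m_def by (simp add: algebra_simps power2_eq_square power3_eq_cube power4_eq_xxxx)
  moreover have "real m ^ 4 \<ge> 2 * real m ^ 3" "real m ^ 3 \<ge> real m * real m" using m
    by (simp_all add: power4_eq_xxxx power3_eq_cube mult_right_mono)
  ultimately have pm: "p_m m (real m) \<ge> 0" using m by (simp add: algebra_simps)
  have "\<forall>x. 1 \<le> x \<and> x \<le> real m \<longrightarrow> isCont (p_m m) x"
    unfolding p_m_def by (auto intro!: continuous_intros)
  then obtain r where "1 \<le> r" "p_m m r = 0"
    using IVT[of "p_m m" 1 0 "real m"] p1 pm m by auto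
  moreover have "r \<noteq> 1" using p1 \<open>p_m m r = 0\<close> by auto
  ultimately show ?thesis by (intro that[of r]) auto
qed

lemma p_m_rho':
  assumes "2 \<le> m" shows "p_m m (rho' m) = 0"
proof -
  obtain r where "p_m m r = 0" using p_m_root_gt_1[OF assms] by blast
  then show ?thesis using Max_in[OF finite_p_m_roots, of m] unfolding rho'_def by auto
qed

lemma one_less_rho': "2 \<le> m \<Longrightarrow> 1 < rho' m"
  using p_m_root_gt_1 root_le_rho' by (metis order_less_le_trans)

lemma rho'_gap:
  assumes "2 \<le> m" shows "real m - 3/2 < (rho' m)\<^sup>2 - rho' m"
proof -
  let ?r = "rho' m"
  have r1: "?r > 1" using one_less_rho'[OF assms] .
  then have "?r\<^sup>2 > 1" by (simp add: power2_eq_square) (metis less_1_mult)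
  then have pos: "?r\<^sup>2 + ?r - 1/2 > 0" using r1 by linarith
  have "(?r\<^sup>2 - ?r - (real m - 3/2)) * (?r\<^sup>2 + ?r - 1/2) = 1/4"
    using p_m_rho'[OF assms] unfolding p_m_factor by simp
  then have "?r\<^sup>2 - ?r - (real m - 3/2) > 0"
    using pos by (metis zero_less_mult_pos2 zero_less_divide_1_iff zero_less_numeral)
  then show ?thesis by simp
qed

lemma gap_above_rho':
  assumes "2 \<le> m" "rho' m \<le> r"
  shows "real m - 3/2 < r\<^sup>2 - r"
proof -
  have "0 \<le> (r - rho' m) * (r + rho' m - 1)"
    using assms one_less_rho'[OF assms(1)] by (intro mult_nonneg_nonneg) auto
  then have "(rho' m)\<^sup>2 - rho' m \<le> r\<^sup>2 - r" by (simp add: algebra_simps power2_eq_square)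
  then show ?thesis using rho'_gap[OF assms(1)] by simp
qed

text \<open>With k = n - 3 vertices adjacent to both 0 and 1, p_(2n-4) is the determinant of the
  linear system satisfied by the eigenvector entries at 0 and 1.\<close>
lemma p_m_Sminus:
  assumes "3 \<le> n"
  shows "p_m (2*n-4) x = (x\<^sup>2 - 1 - (real n - 3)) * (x\<^sup>2 - (real n - 3)) - (x + (real n - 3))\<^sup>2"
proof -
  have "real (2*n-4) = 2 * (real n - 3) + 2" using assms by (simp add: of_nat_diff)
  then show ?thesis unfolding p_m_def by (simp add: field_simps power2_eq_square power4_eq_xxxx)
qed

lemma Sminus_E_iff:
  "Sminus_E n x y \<longleftrightarrow> x < n \<and> y < n \<and>
     ((x = 0 \<and> y \<noteq> 0) \<or> (y = 0 \<and> x \<noteq> 0) \<or> (x = 1 \<and> y \<ge> 3) \<or> (y = 1 \<and> x \<ge> 3))" (is "_ \<longleftrightarrow> ?rhs")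
proof
  show "Sminus_E n x y \<Longrightarrow> ?rhs" unfolding Sminus_E_def doubleton_eq_iff by auto
  show "?rhs \<Longrightarrow> Sminus_E n x y"
    unfolding Sminus_E_def doubleton_eq_iff by (cases "x = 1 \<or> y = 1") (auto intro: exI[of _ x] exI[of _ y])
qed

lemma simple_graph_Sminus: "simple_graph (Sminus_V n) (Sminus_E n)"
  unfolding simple_graph_def Sminus_V_def Sminus_E_iff by auto

lemma Sminus_neighbours_0: "neighbours (Sminus_V n) (Sminus_E n) 0 = {1..<n}"
  unfolding neighbours_def Sminus_V_def Sminus_E_iff by auto

lemma Sminus_neighbours_1: "3 \<le> n \<Longrightarrow> neighbours (Sminus_V n) (Sminus_E n) 1 = insert 0 {3..<n}"
  unfolding neighbours_def Sminus_V_def Sminus_E_iff by auto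

lemma Sminus_neighbours_2: "3 \<le> n \<Longrightarrow> neighbours (Sminus_V n) (Sminus_E n) 2 = {0}"
  unfolding neighbours_def Sminus_V_def Sminus_E_iff by auto

lemma Sminus_neighbours_ge_3: "3 \<le> w \<Longrightarrow> w < n \<Longrightarrow> neighbours (Sminus_V n) (Sminus_E n) w = {0, 1}"
  unfolding neighbours_def Sminus_V_def Sminus_E_iff by auto

lemma sum_from_1_split: "3 \<le> (n::nat) \<Longrightarrow> (\<Sum>u\<in>{1..<n}. f u) = f 1 + f 2 + (\<Sum>u\<in>{3..<n}. f u :: real)"
proof -
  assume "3 \<le> n"
  then have "{1..<n} = insert 1 (insert 2 {3..<n})" by auto
  then show ?thesis by simp
qed

lemma Sminus_eigen_equations:
  assumes n: "3 \<le> n"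
    and ev: "\<forall>v\<in>Sminus_V n. (\<Sum>u\<in>neighbours (Sminus_V n) (Sminus_E n) v. z u) = lam * z v"
  defines "k \<equiv> real n - 3"
  shows "lam * z 2 = z 0" "\<And>w. w \<in> {3..<n} \<Longrightarrow> lam * z w = z 0 + z 1"
    "(lam\<^sup>2 - 1 - k) * z 0 = (lam + k) * z 1" "(lam\<^sup>2 - k) * z 1 = (lam + k) * z 0"
proof -
  define W where "W = (\<Sum>u\<in>{3..<n}. z u)"
  have V: "0 \<in> Sminus_V n" "1 \<in> Sminus_V n" "2 \<in> Sminus_V n" using n unfolding Sminus_V_def by auto
  have nb: "(\<Sum>u\<in>neighbours (Sminus_V n) (Sminus_E n) v. z u) = lam * z v" if "v \<in> Sminus_V n" for v
    using ev that by blast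
  have e0: "lam * z 0 = z 1 + z 2 + W"
    using nb[OF V(1), unfolded Sminus_neighbours_0 sum_from_1_split[OF n]] unfolding W_def by simp
  have e1: "lam * z 1 = z 0 + W"
    using nb[OF V(2), unfolded Sminus_neighbours_1[OF n]] unfolding W_def by simp
  show e2: "lam * z 2 = z 0" using nb[OF V(3), unfolded Sminus_neighbours_2[OF n]] by simp
  show ew: "lam * z w = z 0 + z 1" if "w \<in> {3..<n}" for w
  proof -
    have w: "w \<in> Sminus_V n" "3 \<le> w" "w < n" using that unfolding Sminus_V_def by auto
    show ?thesis using nb[OF w(1), unfolded Sminus_neighbours_ge_3[OF w(2,3)]] by simp
  qed
  have "lam * W = (\<Sum>u\<in>{3..<n}. z 0 + z 1)" unfolding W_def sum_distrib_left
    using ew by (intro sum.cong) auto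
  then have lW: "lam * W = k * (z 0 + z 1)" unfolding k_def using n by (simp add: of_nat_diff)
  have "lam * (lam * z 0) = lam * z 1 + lam * z 2 + lam * W" using e0 by (simp add: algebra_simps)
  then show "(lam\<^sup>2 - 1 - k) * z 0 = (lam + k) * z 1" using e2 lW by (simp add: algebra_simps power2_eq_square)
  have "lam * (lam * z 1) = lam * z 0 + lam * W" using e1 by (simp add: algebra_simps)
  then show "(lam\<^sup>2 - k) * z 1 = (lam + k) * z 0" using lW by (simp add: algebra_simps power2_eq_square)
qed

lemma Sminus_adj_eigenvalue_cases:
  assumes n: "3 \<le> n" and "adj_eigenvalue (Sminus_V n) (Sminus_E n) lam"
  shows "lam = 0 \<or> p_m (2*n-4) lam = 0"
proof (rule ccontr)
  assume "\<not> ?thesis"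
  then have l0: "lam \<noteq> 0" and p0: "p_m (2*n-4) lam \<noteq> 0" by auto
  obtain z where z: "\<exists>v\<in>Sminus_V n. z v \<noteq> 0"
    and ev: "\<forall>v\<in>Sminus_V n. (\<Sum>u\<in>neighbours (Sminus_V n) (Sminus_E n) v. z u) = lam * z v"
    using assms(2) unfolding adj_eigenvalue_def neighbours_def by blast
  define k where "k = real n - 3"
  note eqs = Sminus_eigen_equations[OF n ev, folded k_def]
  have p: "p_m (2*n-4) lam = (lam\<^sup>2 - 1 - k) * (lam\<^sup>2 - k) - (lam + k)\<^sup>2"
    unfolding k_def by (rule p_m_Sminus[OF n])
  have "p_m (2*n-4) lam * z 0 = (lam\<^sup>2 - k) * ((lam\<^sup>2 - 1 - k) * z 0 - (lam + k) * z 1)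
      + (lam + k) * ((lam\<^sup>2 - k) * z 1 - (lam + k) * z 0)"
    "p_m (2*n-4) lam * z 1 = (lam\<^sup>2 - 1 - k) * ((lam\<^sup>2 - k) * z 1 - (lam + k) * z 0)
      + (lam + k) * ((lam\<^sup>2 - 1 - k) * z 0 - (lam + k) * z 1)"
    unfolding p by (simp_all add: algebra_simps power2_eq_square)
  then have z01: "z 0 = 0" "z 1 = 0" using eqs(3,4) p0 by simp_all
  have "z v = 0" if "v \<in> Sminus_V n" for v
  proof -
    have "v = 0 \<or> v = 1 \<or> v = 2 \<or> v \<in> {3..<n}" using that unfolding Sminus_V_def by auto
    then show ?thesis using eqs(1,2) z01 l0 by auto
  qed
  then show False using z by blast
qed

lemma Sminus_eigenI:
  fixes z :: "nat \<Rightarrow> real"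
  assumes n: "3 \<le> n" and e0: "lam * z 0 = z 1 + z 2 + (\<Sum>u\<in>{3..<n}. z u)"
    and e1: "lam * z 1 = z 0 + (\<Sum>u\<in>{3..<n}. z u)" and e2: "lam * z 2 = z 0"
    and ew: "\<And>w. w \<in> {3..<n} \<Longrightarrow> lam * z w = z 0 + z 1"
  shows "\<forall>v\<in>Sminus_V n. (\<Sum>u\<in>neighbours (Sminus_V n) (Sminus_E n) v. z u) = lam * z v"
proof
  fix v assume "v \<in> Sminus_V n"
  then consider "v = 0" | "v = 1" | "v = 2" | "v \<in> {3..<n}" unfolding Sminus_V_def by force
  then show "(\<Sum>u\<in>neighbours (Sminus_V n) (Sminus_E n) v. z u) = lam * z v"
  proof cases
    case 1
    then show ?thesis using e0 unfolding 1 Sminus_neighbours_0 sum_from_1_split[OF n] by simp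
  next
    case 2
    then show ?thesis using e1 unfolding 2 Sminus_neighbours_1[OF n] by simp
  next
    case 3
    then show ?thesis using e2 unfolding 3 Sminus_neighbours_2[OF n] by simp
  next
    case 4
    then show ?thesis using ew[OF 4] Sminus_neighbours_ge_3[of v n] by simp
  qed
qed

lemma Sminus_adj_eigenvalue_rho':
  assumes n: "3 \<le> n"
  shows "adj_eigenvalue (Sminus_V n) (Sminus_E n) (rho' (2*n-4))"
proof -
  have m: "2 \<le> 2*n-4" using n by simp
  define lam where "lam = rho' (2*n-4)"
  have l1: "lam > 1" using one_less_rho'[OF m] unfolding lam_def .
  define k where "k = real n - 3"
  have k: "k \<ge> 0" unfolding k_def using n by simp
  have det: "(lam\<^sup>2 - 1 - k) * (lam\<^sup>2 - k) = (lam + k)\<^sup>2"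
    using p_m_rho'[OF m] p_m_Sminus[OF n, of lam] unfolding lam_def k_def by simp
  define a where "a = lam + k"
  define b where "b = lam\<^sup>2 - 1 - k"
  define z where "z = (\<lambda>v::nat. if v = 0 then a else if v = 1 then b else if v = 2 then a / lam else (a + b) / lam)"
  have W: "(\<Sum>u\<in>{3..<n}. z u) = k * ((a + b) / lam)"
  proof -
    have "(\<Sum>u\<in>{3..<n}. z u) = (\<Sum>u\<in>{3..<n}. (a + b) / lam)" unfolding z_def by (intro sum.cong) auto
    then show ?thesis unfolding k_def using n by (simp add: of_nat_diff)
  qed
  have "lam * (a + k * ((a + b) / lam)) = (lam + k) * a + k * b" using l1 by (simp add: field_simps)
  also have "\<dots> = lam * (lam * b)"
    using det unfolding a_def b_def by (simp add: algebra_simps power2_eq_square)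
  finally have e1: "lam * z 1 = z 0 + (\<Sum>u\<in>{3..<n}. z u)" unfolding W using l1 by (simp add: z_def)
  have "z 1 + z 2 + (\<Sum>u\<in>{3..<n}. z u) = b + a / lam + k * ((a + b) / lam)"
    unfolding W by (simp add: z_def)
  also have "\<dots> = lam * z 0" unfolding z_def a_def b_def using l1 by (simp add: field_simps power2_eq_square)
  finally have e0: "lam * z 0 = z 1 + z 2 + (\<Sum>u\<in>{3..<n}. z u)" by simp
  have "\<forall>v\<in>Sminus_V n. (\<Sum>u\<in>neighbours (Sminus_V n) (Sminus_E n) v. z u) = lam * z v"
    by (rule Sminus_eigenI[OF n e0 e1]) (use l1 in \<open>auto simp: z_def\<close>)
  moreover have "z 0 \<noteq> 0" "0 \<in> Sminus_V n" unfolding z_def a_def Sminus_V_def using l1 k n by auto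
  ultimately show ?thesis unfolding adj_eigenvalue_def lam_def[symmetric] neighbours_def by blast
qed

lemma spectral_radius_Sminus:
  assumes n: "3 \<le> n"
  shows "spectral_radius (Sminus_V n) (Sminus_E n) = rho' (2*n-4)"
proof (rule spectral_radius_eqI[OF simple_graph_Sminus Sminus_adj_eigenvalue_rho'[OF n]])
  have "2 \<le> 2*n-4" using n by simp
  then have "0 < rho' (2*n-4)" using one_less_rho' by fastforce
  then show "lam \<le> rho' (2*n-4)" if "adj_eigenvalue (Sminus_V n) (Sminus_E n) lam" for lam
    using Sminus_adj_eigenvalue_cases[OF n that] root_le_rho' by fastforce
qed

lemma Sminus_labelling:
  assumes L: "finite L" and distinct: "u \<noteq> c" "u \<noteq> p" "c \<noteq> p" "u \<notin> L" "c \<notin> L" "p \<notin> L"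
  obtains h where "bij_betw h (insert u (insert c (insert p L))) {0..<card L + 3}"
    "h u = 0" "h c = 1" "h p = 2" "\<And>v. v \<in> L \<Longrightarrow> 3 \<le> h v"
proof -
  define n where "n = card L + 3"
  obtain g where g: "bij_betw g L {3..<n}"
    using finite_same_card_bij[OF L, of "{3..<n}"] unfolding n_def by auto
  define h where "h = (\<lambda>v. if v = u then 0 else if v = c then 1 else if v = p then 2 else g v)"
  have gL: "g ` L = {3..<n}" using bij_betw_imp_surj_on[OF g] .
  have hL: "h v = g v" "3 \<le> g v" if "v \<in> L" for v
    using that distinct gL unfolding h_def by auto
  have huc: "h u = 0" "h c = 1" "h p = 2" using distinct unfolding h_def by auto
  have hcases: "(v = u \<and> h v = 0) \<or> (v = c \<and> h v = 1) \<or> (v = p \<and> h v = 2) \<or>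
      (v \<in> L \<and> h v = g v \<and> 3 \<le> h v)" if "v \<in> insert u (insert c (insert p L))" for v
    using that hL huc by auto
  have "inj_on h (insert u (insert c (insert p L)))"
  proof (rule inj_onI)
    fix v w assume vw: "v \<in> insert u (insert c (insert p L))" "w \<in> insert u (insert c (insert p L))" "h v = h w"
    show "v = w"
    proof (cases "v \<in> L \<and> w \<in> L")
      case True
      then show ?thesis using vw(3) hL inj_onD[OF bij_betw_imp_inj_on[OF g]] by simp
    next
      case False
      then show ?thesis using vw hcases[OF vw(1)] hcases[OF vw(2)] by auto
    qed
  qed
  moreover have "h ` insert u (insert c (insert p L)) = {0..<n}"
  proof -
    have "h ` L = {3..<n}" using hL gL by (simp cong: image_cong)
    moreover have "{0..<n} = {0, 1, 2} \<union> {3..<n}" unfolding n_def by auto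
    ultimately show ?thesis using huc by (simp add: insert_commute)
  qed
  ultimately have "bij_betw h (insert u (insert c (insert p L))) {0..<card L + 3}"
    unfolding bij_betw_def n_def by blast
  moreover have "3 \<le> h v" if "v \<in> L" for v using hL[OF that] by simp
  ultimately show ?thesis using that huc by blast
qed

lemma graph_iso_SminusI:
  assumes L: "finite L" and distinct: "u \<noteq> c" "u \<noteq> p" "c \<noteq> p" "u \<notin> L" "c \<notin> L" "p \<notin> L"
    and V: "V = insert u (insert c (insert p L))"
    and E: "\<And>v w. v \<in> V \<Longrightarrow> w \<in> V \<Longrightarrow>
      E v w \<longleftrightarrow> (v = u \<and> w \<noteq> u) \<or> (w = u \<and> v \<noteq> u) \<or> (v = c \<and> w \<in> L) \<or> (w = c \<and> v \<in> L)"
  shows "graph_iso V E (Sminus_V (card L + 3)) (Sminus_E (card L + 3))"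
proof -
  obtain h where h: "bij_betw h V {0..<card L + 3}" "h u = 0" "h c = 1" "h p = 2" "\<And>v. v \<in> L \<Longrightarrow> 3 \<le> h v"
    using Sminus_labelling[OF L distinct] unfolding V by blast
  have "h v = 0 \<longleftrightarrow> v = u" "h v = 1 \<longleftrightarrow> v = c" "3 \<le> h v \<longleftrightarrow> v \<in> L" "h v < card L + 3"
    if "v \<in> V" for v
    using that h(2-5) bij_betwE[OF h(1)] distinct unfolding V by fastforce+
  then have "E v w \<longleftrightarrow> Sminus_E (card L + 3) (h v) (h w)" if "v \<in> V" "w \<in> V" for v w
    unfolding E[OF that] Sminus_E_iff by (simp only: that simp_thms)
  then show ?thesis using h(1) unfolding graph_iso_def Sminus_V_def by blast
qed

lemma fish_free_neighbourhood:
  assumes sg: "simple_graph V E" and ff: "fish_free V E" and u: "u \<in> V"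
    and bd: "b \<in> neighbours V E u" "d \<in> neighbours V E u" "b \<noteq> d"
    and z: "z \<in> V" "z \<noteq> u" "E b z" "E z d"
    and ef: "e \<in> neighbours V E u" "f \<in> neighbours V E u" "E e f" "e \<notin> {b, z, d}" "f \<notin> {b, z, d}"
  shows False
proof -
  have "E u b" "E u d" "E u e" "E u f" "b \<in> V" "d \<in> V" "e \<in> V" "f \<in> V"
    using bd ef unfolding neighbours_def by auto
  moreover have "distinct [u, b, z, d, e, f]"
    using calculation bd z ef simple_graph_irrefl[OF sg] by auto
  ultimately show False
    using ff u z ef simple_graph_sym[OF sg] unfolding fish_free_def by blast
qed

lemma two_le_card_obtain:
  assumes "2 \<le> card X"
  obtains a b where "a \<in> X" "b \<in> X" "a \<noteq> b"
proof -
  have "finite X" "\<not> card X \<le> Suc 0" using assms card.infinite by force+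
  then show ?thesis using card_le_Suc0_iff_eq that by blast
qed

definition edges_within :: "('a \<Rightarrow> 'a \<Rightarrow> bool) \<Rightarrow> 'a set \<Rightarrow> 'a set \<Rightarrow> bool" where
  "edges_within E A S \<longleftrightarrow> (\<forall>v\<in>A. \<forall>w\<in>A. E v w \<longrightarrow> v \<in> S \<and> w \<in> S)"

text \<open>Graphs on A without a path on three vertices that is disjoint from a further edge; by
  fish_free_neighbourhood this is the situation in every neighbourhood of a fish-free graph.\<close>
context
  fixes E :: "'a \<Rightarrow> 'a \<Rightarrow> bool" and A :: "'a set"
  assumes sym: "\<And>a b. E a b \<Longrightarrow> E b a" and irrefl: "\<And>a. \<not> E a a"
    and no_path_edge: "\<And>b z d e f. b \<in> A \<Longrightarrow> z \<in> A \<Longrightarrow> d \<in> A \<Longrightarrow> e \<in> A \<Longrightarrow> f \<in> A \<Longrightarrow>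
      E b z \<Longrightarrow> E z d \<Longrightarrow> b \<noteq> d \<Longrightarrow> E e f \<Longrightarrow> e \<notin> {b, z, d} \<Longrightarrow> f \<notin> {b, z, d} \<Longrightarrow> False"
begin

lemma triangle_pendant_edges:
  assumes A: "b \<in> A" "c \<in> A" "d \<in> A" "h \<in> A" and tri: "E b c" "E c d" "E d b" and h: "h \<notin> {b, c, d}" "E b h"
  shows "edges_within E A {h, b, c, d}"
proof -
  have ne: "b \<noteq> c" "c \<noteq> d" "d \<noteq> b" using tri irrefl by auto
  have meet: "v \<in> {b, c, d} \<or> w \<in> {b, c, d}" if "v \<in> A" "w \<in> A" "E v w" for v w
    using no_path_edge[of b c d v w] that A tri ne by auto
  have "w \<in> {h, b, c, d}" if vw: "v \<in> A" "w \<in> A" "E v w" for v w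
  proof (rule ccontr)
    assume w: "w \<notin> {h, b, c, d}"
    then have "v \<in> {b, c, d}" using meet[OF vw] by auto
    then show False
      using no_path_edge[of h b w c d] no_path_edge[of h b d c w] no_path_edge[of h b c d w]
        A vw w h tri ne sym by auto
  qed
  then show ?thesis unfolding edges_within_def using sym by blast
qed

lemma triangle_edges_within:
  assumes A: "b \<in> A" "c \<in> A" "d \<in> A" and tri: "E b c" "E c d" "E d b"
  obtains S where "S \<subseteq> A" "finite S" "card S \<le> 4" "edges_within E A S"
proof (cases "edges_within E A {b, c, d}")
  case True
  then show ?thesis using that[of "{b, c, d}"] A by (simp add: card_insert_if)
next
  case False
  have ne: "b \<noteq> c" "c \<noteq> d" "d \<noteq> b" using tri irrefl by auto
  then have "v \<in> {b, c, d} \<or> w \<in> {b, c, d}" if "v \<in> A" "w \<in> A" "E v w" for v w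
    using no_path_edge[of b c d v w] that A tri by auto
  then obtain t h where th: "t \<in> {b, c, d}" "h \<in> A" "h \<notin> {b, c, d}" "E t h"
    using False sym unfolding edges_within_def by blast
  then have "edges_within E A {h, b, c, d}"
    using triangle_pendant_edges[of b c d h] triangle_pendant_edges[of c d b h]
      triangle_pendant_edges[of d b c h] A tri by (auto simp: insert_commute)
  then show ?thesis using that[of "{h, b, c, d}"] A th by (simp add: card_insert_if)
qed

lemma path_edges_within:
  assumes A: "f \<in> A" "b \<in> A" "c \<in> A" "d \<in> A"
    and path: "E f b" "E b c" "E c d" and ne: "b \<noteq> d" "f \<noteq> c" "f \<noteq> d"
  shows "edges_within E A {f, b, c, d}"
proof -
  have ne': "b \<noteq> c" "c \<noteq> d" "f \<noteq> b" using path irrefl by auto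
  have "w \<in> {f, b, c, d}" if vw: "v \<in> A" "w \<in> A" "E v w" for v w
  proof (rule ccontr)
    assume w: "w \<notin> {f, b, c, d}"
    show False
      using no_path_edge[of b c d v w] no_path_edge[of w b f c d] no_path_edge[of w c d f b]
        no_path_edge[of f b c d w] A vw w path ne ne' sym by blast
  qed
  then show ?thesis unfolding edges_within_def using sym by blast
qed

lemma no_path_edge_cases:
  obtains "\<forall>v\<in>A. card {w\<in>A. E v w} \<le> 1"
  | c where "c \<in> A" "2 \<le> card {w\<in>A. E c w}" "\<forall>v\<in>A. \<forall>w\<in>A. E v w \<longrightarrow> v = c \<or> w = c"
  | S where "S \<subseteq> A" "finite S" "card S \<le> 4" "edges_within E A S"
proof (cases "\<forall>v\<in>A. card {w\<in>A. E v w} \<le> 1")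
  case False
  then obtain c where c: "c \<in> A" "2 \<le> card {w\<in>A. E c w}" by force
  show ?thesis
  proof (cases "\<forall>v\<in>A. \<forall>w\<in>A. E v w \<longrightarrow> v = c \<or> w = c")
    case False
    then obtain e f where ef: "e \<in> A" "f \<in> A" "E e f" "e \<noteq> c" "f \<noteq> c" by blast
    obtain b d where bd: "b \<in> A" "d \<in> A" "E c b" "E c d" "b \<noteq> d"
      using two_le_card_obtain[OF c(2)] by blast
    then have "e \<in> {b, d} \<or> f \<in> {b, d}" using no_path_edge[of b c d e f] c ef sym by auto
    then obtain b' d' f' where bdf: "b' \<in> A" "d' \<in> A" "f' \<in> A" "E c b'" "E c d'" "b' \<noteq> d'"
      "E b' f'" "f' \<noteq> c"
      using bd ef sym by blast
    show ?thesis
    proof (cases "f' = d'")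
      case True
      then show ?thesis using triangle_edges_within[of b' c d'] that(3) bdf c sym by blast
    next
      case False
      then have "edges_within E A {f', b', c, d'}"
        using path_edges_within[of f' b' c d'] bdf c sym by blast
      then show ?thesis using that(3)[of "{f', b', c, d'}"] bdf c by (simp add: card_insert_if)
    qed
  qed (use that(2) c in blast)
qed (use that(1) in blast)
end

text \<open>The assumption big is what rho >= rho'(m) yields, see gap_above_rho'.\<close>
locale fish_free_perron =
  fixes V :: "'a set" and E :: "'a \<Rightarrow> 'a \<Rightarrow> bool" and m :: nat and u :: 'a
    and y :: "'a \<Rightarrow> real" and rho :: real
  assumes sg: "simple_graph V E" and ff: "fish_free V E" and ni: "no_isolated V E"
    and me: "num_edges E = m" and evm: "even m" and m24: "24 \<le> m"
    and uV: "u \<in> V" and yu: "y u = 1" and y_bounds: "\<forall>v\<in>V. 0 \<le> y v \<and> y v \<le> 1"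
    and eig: "\<forall>v\<in>V. (\<Sum>w\<in>neighbours V E v. y w) = rho * y v"
    and big: "real m - 3/2 < rho\<^sup>2 - rho"
begin

abbreviation "A \<equiv> neighbours V E u"
abbreviation "B \<equiv> V - insert u A"
abbreviation "dA v \<equiv> card (neighbours V E v \<inter> A)"
abbreviation "dB v \<equiv> card (neighbours V E v \<inter> B)"

lemma finite_V: "finite V" using simple_graph_finite[OF sg] .
lemma A_subset: "A \<subseteq> V" unfolding neighbours_def by auto
lemma finite_A: "finite A" using finite_subset[OF A_subset finite_V] .
lemma finite_B: "finite B" using finite_V by auto
lemma u_notin_A: "u \<notin> A" unfolding neighbours_def using simple_graph_irrefl[OF sg] by auto
lemma V_split: "V = insert u (A \<union> B)" using uV A_subset by auto

lemma sum_V_split: "(\<Sum>v\<in>V. f v) = f u + (\<Sum>v\<in>A. f v) + (\<Sum>v\<in>B. f v)"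
proof -
  have "sum f (insert u (A \<union> B)) = f u + sum f (A \<union> B)" using finite_A finite_B u_notin_A by simp
  also have "sum f (A \<union> B) = sum f A + sum f B" by (rule sum.union_disjoint) (use finite_A finite_B in auto)
  finally show ?thesis unfolding V_split[symmetric] by (simp add: add.assoc)
qed

lemma sum_Int_A_Un_Int_B: "sum f ((X \<inter> A) \<union> (X \<inter> B)) = sum f (X \<inter> A) + sum f (X \<inter> B)"
  by (rule sum.union_disjoint) (use finite_A finite_B in auto)

lemma card_Int_A_Un_Int_B: "card ((X \<inter> A) \<union> (X \<inter> B)) = card (X \<inter> A) + card (X \<inter> B)"
  by (rule card_Un_disjoint) (use finite_A finite_B in auto)

lemma finite_Int_A_Un_Int_B: "finite ((X \<inter> A) \<union> (X \<inter> B))" and u_notin_Int_A_Un_Int_B: "u \<notin> (X \<inter> A) \<union> (X \<inter> B)"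
  using finite_A finite_B u_notin_A by auto

lemma sum_y_le_card: "X \<subseteq> V \<Longrightarrow> (\<Sum>w\<in>X. y w) \<le> real (card X)"
  using sum_mono[of X y "\<lambda>_. 1"] y_bounds by auto

lemma sum_y_nonneg: "X \<subseteq> V \<Longrightarrow> 0 \<le> (\<Sum>w\<in>X. y w)"
  using sum_nonneg[of X y] y_bounds by auto

lemma rho_eq_sum_A: "rho = (\<Sum>v\<in>A. y v)"
  using eig uV yu by auto

lemma rho_ge: "26/5 \<le> rho"
proof (rule ccontr)
  assume "\<not> ?thesis"
  then have small: "rho < 26/5" by simp
  have "0 \<le> rho" unfolding rho_eq_sum_A by (rule sum_y_nonneg[OF A_subset])
  then have "rho * rho \<le> 26/5 * rho" using small by (intro mult_right_mono) auto
  then have "rho\<^sup>2 - rho \<le> 21/5 * rho" by (simp add: power2_eq_square)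
  also have "\<dots> < 21/5 * (26/5)" using small by simp
  finally show False using big m24 by simp
qed

lemma neighbours_of_A:
  assumes "v \<in> A"
  shows "neighbours V E v = insert u ((neighbours V E v \<inter> A) \<union> (neighbours V E v \<inter> B))"
  using assms uV simple_graph_sym[OF sg] unfolding neighbours_def by auto

lemma neighbours_of_B:
  assumes "w \<in> B"
  shows "neighbours V E w = (neighbours V E w \<inter> A) \<union> (neighbours V E w \<inter> B)"
  using assms uV simple_graph_sym[OF sg] unfolding neighbours_def by auto

lemma eigen_A:
  assumes v: "v \<in> A"
  shows "rho * y v = 1 + (\<Sum>w\<in>neighbours V E v \<inter> A. y w) + (\<Sum>w\<in>neighbours V E v \<inter> B. y w)"
proof -
  have "rho * y v = (\<Sum>w\<in>neighbours V E v. y w)" using eig v A_subset by auto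
  also have "\<dots> = y u + ((\<Sum>w\<in>neighbours V E v \<inter> A. y w) + (\<Sum>w\<in>neighbours V E v \<inter> B. y w))"
    by (subst neighbours_of_A[OF v], subst sum.insert[OF finite_Int_A_Un_Int_B u_notin_Int_A_Un_Int_B])
      (subst sum_Int_A_Un_Int_B, rule refl)
  finally show ?thesis using yu by simp
qed

lemma eigen_B:
  assumes w: "w \<in> B"
  shows "rho * y w = (\<Sum>z\<in>neighbours V E w \<inter> A. y z) + (\<Sum>z\<in>neighbours V E w \<inter> B. y z)"
proof -
  have "rho * y w = (\<Sum>z\<in>neighbours V E w. y z)" using eig w by auto
  also have "\<dots> = (\<Sum>z\<in>neighbours V E w \<inter> A. y z) + (\<Sum>z\<in>neighbours V E w \<inter> B. y z)"
    by (subst neighbours_of_B[OF w]) (rule sum_Int_A_Un_Int_B)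
  finally show ?thesis .
qed

lemma rho_sq_eq: "rho\<^sup>2 = real (card A) + (\<Sum>v\<in>A. real (dA v) * y v) + (\<Sum>w\<in>B. real (dA w) * y w)"
proof -
  have "rho\<^sup>2 = (\<Sum>v\<in>A. rho * y v)" using rho_eq_sum_A by (simp add: power2_eq_square sum_distrib_left)
  also have "\<dots> = (\<Sum>v\<in>A. \<Sum>w\<in>neighbours V E v \<inter> V. y w)"
    using eig A_subset by (intro sum.cong refl) (auto simp: neighbours_def Int_absorb2)
  also have "\<dots> = (\<Sum>w\<in>V. real (dA w) * y w)" by (rule sum_neighbours_swap[OF sg A_subset subset_refl])
  also have "\<dots> = real (dA u) + ((\<Sum>v\<in>A. real (dA v) * y v) + (\<Sum>w\<in>B. real (dA w) * y w))"
    by (subst sum_V_split) (simp add: yu)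
  also have "dA u = card A" by (simp add: Int_absorb)
  finally show ?thesis by simp
qed

lemma twice_m_eq:
  "2 * real m = 2 * real (card A) + (\<Sum>v\<in>A. real (dA v)) + 2 * (\<Sum>w\<in>B. real (dA w)) + (\<Sum>w\<in>B. real (dB w))"
proof -
  have "card (neighbours V E v) = 1 + dA v + dB v" if "v \<in> A" for v
    by (subst neighbours_of_A[OF that], subst card.insert[OF finite_Int_A_Un_Int_B u_notin_Int_A_Un_Int_B])
      (simp add: card_Int_A_Un_Int_B)
  moreover have "card (neighbours V E w) = dA w + dB w" if "w \<in> B" for w
    by (subst neighbours_of_B[OF that]) (rule card_Int_A_Un_Int_B)
  moreover have "(\<Sum>v\<in>A. real (dB v)) = (\<Sum>w\<in>B. real (dA w))"
    using sum_neighbours_swap[OF sg A_subset, of B "\<lambda>_. 1"] by simp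
  moreover have "2 * real m = real (card A) + (\<Sum>v\<in>A. real (card (neighbours V E v)))
      + (\<Sum>w\<in>B. real (card (neighbours V E w)))"
    using sum_card_neighbours[OF sg] sum_V_split[of "\<lambda>v. real (card (neighbours V E v))"] me
    by (metis of_nat_mult of_nat_numeral of_nat_sum)
  ultimately show ?thesis by (simp add: sum.distrib)
qed

lemma excess_eq:
  "real m - rho\<^sup>2 + rho = rho + (\<Sum>v\<in>A. real (dA v)) / 2 - (\<Sum>v\<in>A. real (dA v) * y v)
     + ((\<Sum>w\<in>B. real (dA w)) - (\<Sum>w\<in>B. real (dA w) * y w)) + (\<Sum>w\<in>B. real (dB w)) / 2"
  using rho_sq_eq twice_m_eq by simp

lemma excess_lt:
  "rho + (\<Sum>v\<in>A. real (dA v)) / 2 - (\<Sum>v\<in>A. real (dA v) * y v)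
     + ((\<Sum>w\<in>B. real (dA w)) - (\<Sum>w\<in>B. real (dA w) * y w)) + (\<Sum>w\<in>B. real (dB w)) / 2 < 3/2"
  using excess_eq big by simp

lemma sum_dA_y_le: "(\<Sum>v\<in>X. real (dA v) * y v) \<le> (\<Sum>v\<in>X. real (dA v))" if "X \<subseteq> V"
  using that y_bounds by (intro sum_mono mult_left_le) auto

lemma sum_dA_y_nonneg: "0 \<le> (\<Sum>v\<in>X. real (dA v) * y v)" if "X \<subseteq> V"
  using that y_bounds by (intro sum_nonneg) auto

lemma no_fish_at_u:
  assumes "b \<in> A" "d \<in> A" "b \<noteq> d" "z \<in> V" "z \<noteq> u" "E b z" "E z d"
    "e \<in> A" "f \<in> A" "E e f" "e \<notin> {b, z, d}" "f \<notin> {b, z, d}"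
  shows False
  using fish_free_neighbourhood[OF sg ff uV] assms by blast

end

text \<open>The contribution of one vertex of B when the edges of G[A] lie within four vertices;
  Z stands for rho y_w.\<close>
lemma B_vertex_arith:
  fixes a b :: nat and r Z :: real
  assumes "a \<le> 3" "b \<le> 2" "1 \<le> b \<Longrightarrow> a \<le> 2" "0 \<le> Z" "Z \<le> a + b" "26/5 \<le> r"
  shows "0 \<le> a * (r * r - r * Z - 3 * Z) + b * (r * r) / 2"
proof -
  have rr: "26/5 * r \<le> r * r" using assms(6) by (intro mult_right_mono) auto
  have "(a + b) * (r + 3) \<ge> Z * (r + 3)" using assms(4-6) by (intro mult_right_mono) auto
  then have "a * (r * r - r * Z - 3 * Z) \<ge> a * (r * r - (a + b) * (r + 3))"
    by (intro mult_left_mono) (auto simp: algebra_simps)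
  moreover have "0 \<le> a * (r * r - (a + b) * (r + 3)) + b * (r * r) / 2"
  proof (cases "a + b \<le> 3")
    case True
    then have "real (a + b) * (r + 3) \<le> 3 * (r + 3)" using assms(6) by (intro mult_right_mono) auto
    also have "\<dots> \<le> r * r" using rr assms(6) unfolding distrib_left by linarith
    finally have "real (a + b) * (r + 3) \<le> r * r" .
    then have "0 \<le> a * (r * r - (a + b) * (r + 3))" by (intro mult_nonneg_nonneg) auto
    then show ?thesis by simp
  next
    case False
    then have "a = 2" "b = 2" using assms(1-3) by auto
    moreover have "0 \<le> 2 * (r * r - 4 * (r + 3)) + 2 * (r * r) / 2"
      using rr assms(6) unfolding distrib_left right_diff_distrib by linarith
    ultimately show ?thesis by simp
  qed
  ultimately show ?thesis by linarith
qed

context fish_free_perron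
begin

lemma sum_dA_pos: "0 < (\<Sum>v\<in>A. real (dA v))"
proof (rule ccontr)
  assume "\<not> ?thesis"
  moreover have "0 \<le> (\<Sum>v\<in>A. real (dA v))" "0 \<le> (\<Sum>w\<in>B. real (dB w))" by (simp_all add: sum_nonneg)
  ultimately show False
    using excess_lt rho_ge sum_dA_y_le[OF A_subset] sum_dA_y_nonneg[OF A_subset] sum_dA_y_le[of B] by auto
qed

lemma edge_in_A:
  obtains e f where "e \<in> A" "f \<in> A" "E e f"
proof -
  obtain v where "v \<in> A" "0 < dA v"
    using sum_dA_pos by (metis (no_types, lifting) gr_zeroI of_nat_0 sum.neutral less_irrefl)
  then obtain w where "w \<in> neighbours V E v \<inter> A" by (metis card.empty ex_in_conv less_irrefl)
  then show ?thesis using that \<open>v \<in> A\<close> unfolding neighbours_def by auto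
qed

lemma dA_le_3: assumes "w \<in> B" shows "dA w \<le> 3"
proof (rule ccontr)
  obtain e f where ef: "e \<in> A" "f \<in> A" "E e f" by (rule edge_in_A)
  assume "\<not> ?thesis"
  then have "card (neighbours V E w \<inter> A) \<ge> 4" by simp
  moreover have "card (neighbours V E w \<inter> A) \<le> card (neighbours V E w \<inter> A - {e, f}) + card {e, f}"
    by (rule card_Un_le[THEN order_trans[rotated]], rule card_mono) (use finite_A in auto)
  moreover have "card {e, f} \<le> 2" by (simp add: card_insert_if)
  ultimately have "card (neighbours V E w \<inter> A - {e, f}) \<ge> 2" by linarith
  then obtain b d where "b \<in> neighbours V E w \<inter> A - {e, f}" "d \<in> neighbours V E w \<inter> A - {e, f}" "b \<noteq> d"
    by (rule two_le_card_obtain)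
  then show False
    using no_fish_at_u[of b d w e f] ef assms simple_graph_sym[OF sg] unfolding neighbours_def by auto
qed

lemma dA_eq_3_adjacent:
  assumes w: "w \<in> B" and d3: "dA w = 3" and vv: "v \<in> A" "v' \<in> A" "E v v'"
  shows "v \<in> neighbours V E w"
proof (rule ccontr)
  assume nv: "v \<notin> neighbours V E w"
  have "card (neighbours V E w \<inter> A) \<le> card (neighbours V E w \<inter> A - {v'}) + card {v'}"
    by (rule card_Un_le[THEN order_trans[rotated]], rule card_mono) (use finite_A in auto)
  then have "card (neighbours V E w \<inter> A - {v'}) \<ge> 2" using d3 by simp
  then obtain b d where "b \<in> neighbours V E w \<inter> A - {v'}" "d \<in> neighbours V E w \<inter> A - {v'}" "b \<noteq> d"
    by (rule two_le_card_obtain)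
  then show False
    using no_fish_at_u[of b d w v v'] vv nv w simple_graph_sym[OF sg] unfolding neighbours_def by auto
qed

lemma sum_dA_le_6:
  assumes w: "w \<in> B" and d3: "dA w = 3"
  shows "(\<Sum>v\<in>A. real (dA v)) \<le> 6"
proof -
  define N where "N = neighbours V E w \<inter> A"
  have cN: "card N = 3" and finN: "finite N" using d3 finite_A unfolding N_def by auto
  have "real (dA v) \<le> (if v \<in> N then 2 else 0)" if v: "v \<in> A" for v
  proof -
    have sub: "neighbours V E v \<inter> A \<subseteq> N - {v}"
      using dA_eq_3_adjacent[OF w d3 _ v] simple_graph_sym[OF sg] simple_graph_irrefl[OF sg]
      unfolding N_def neighbours_def by auto
    show ?thesis
    proof (cases "v \<in> N")
      case True
      have "dA v \<le> card (N - {v})" by (rule card_mono) (use finN sub in auto)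
      then show ?thesis using True cN finN by simp
    next
      case False
      have "neighbours V E v \<inter> A = {}"
      proof (rule ccontr)
        assume "neighbours V E v \<inter> A \<noteq> {}"
        then obtain x where "x \<in> A" "E v x" unfolding neighbours_def by auto
        then have "v \<in> neighbours V E w" using dA_eq_3_adjacent[OF w d3 v] by blast
        then show False using False v unfolding N_def by auto
      qed
      then show ?thesis using False by simp
    qed
  qed
  then have "(\<Sum>v\<in>A. real (dA v)) \<le> (\<Sum>v\<in>A. if v \<in> N then 2 else 0)" by (intro sum_mono) auto
  also have "\<dots> = (\<Sum>v\<in>N. 2)" using finite_A unfolding N_def by (simp add: sum.If_cases Int_absorb1 Int_commute)
  finally show ?thesis using cN by simp
qed

lemma dB_le_half_sum_dB:
  assumes w: "w \<in> B" shows "2 * real (dB w) \<le> (\<Sum>z\<in>B. real (dB z))"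
proof -
  have wn: "w \<notin> neighbours V E w \<inter> B" using simple_graph_irrefl[OF sg] unfolding neighbours_def by auto
  have "1 \<le> real (dB z)" if z: "z \<in> neighbours V E w \<inter> B" for z
  proof -
    have "w \<in> neighbours V E z \<inter> B" using z w simple_graph_sym[OF sg] unfolding neighbours_def by auto
    then show ?thesis using finite_B by (simp add: Suc_le_eq card_gt_0_iff) blast
  qed
  then have "(\<Sum>z\<in>neighbours V E w \<inter> B. 1) \<le> (\<Sum>z\<in>neighbours V E w \<inter> B. real (dB z))"
    by (intro sum_mono)
  then have "real (dB w) \<le> (\<Sum>z\<in>neighbours V E w \<inter> B. real (dB z))" by simp
  then have "2 * real (dB w) \<le> (\<Sum>z\<in>insert w (neighbours V E w \<inter> B). real (dB z))"
    using finite_B wn by simp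
  also have "\<dots> \<le> (\<Sum>z\<in>B. real (dB z))" by (rule sum_mono2[OF finite_B]) (use w in auto)
  finally show ?thesis .
qed

lemma rho_y_B_le: assumes w: "w \<in> B" shows "rho * y w \<le> real (dA w) + real (dB w)"
  using eigen_B[OF w] sum_y_le_card[of "neighbours V E w \<inter> A"] sum_y_le_card[of "neighbours V E w \<inter> B"]
    A_subset by fastforce

lemma not_matching: "\<not> (\<forall>v\<in>A. dA v \<le> 1)"
proof
  assume "\<forall>v\<in>A. dA v \<le> 1"
  then have "real (dA v) * y v \<le> y v" if "v \<in> A" for v
    using y_bounds A_subset that mult_right_mono[of "real (dA v)" 1 "y v"] by auto
  then have "(\<Sum>v\<in>A. real (dA v) * y v) \<le> (\<Sum>v\<in>A. y v)" by (intro sum_mono)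
  moreover have "0 \<le> (\<Sum>w\<in>B. real (dB w))" by (simp add: sum_nonneg)
  ultimately show False
    using excess_lt rho_eq_sum_A rho_ge sum_dA_y_le[of B] sum_dA_y_le[OF A_subset] by auto
qed

lemma excess_crude: "rho - (\<Sum>v\<in>A. real (dA v)) / 2 + (\<Sum>w\<in>B. real (dB w)) / 2 < 3/2"
  using excess_lt sum_dA_y_le[OF A_subset] sum_dA_y_le[of B] by auto

context
  fixes S assumes S: "S \<subseteq> A" "finite S" "card S \<le> 4" and S_covers: "edges_within E A S"
begin

lemma dA_le_cover: "v \<in> A \<Longrightarrow> real (dA v) \<le> (if v \<in> S then 3 else 0)"
proof -
  assume v: "v \<in> A"
  have sub: "neighbours V E v \<inter> A \<subseteq> S - {v}"
    using S_covers v simple_graph_irrefl[OF sg] unfolding edges_within_def neighbours_def by auto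
  show ?thesis
  proof (cases "v \<in> S")
    case True
    have "dA v \<le> card (S - {v})" by (rule card_mono) (use S sub in auto)
    then show ?thesis using True S by simp
  next
    case False
    then have "neighbours V E v \<inter> A = {}" using S_covers v unfolding edges_within_def neighbours_def by auto
    then show ?thesis using False by simp
  qed
qed

lemma sum_dA_le_12: "(\<Sum>v\<in>A. real (dA v)) \<le> 12"
proof -
  have "(\<Sum>v\<in>A. real (dA v)) \<le> (\<Sum>v\<in>A. if v \<in> S then 3 else 0)" by (intro sum_mono dA_le_cover)
  also have "\<dots> = 3 * real (card S)" using finite_A S by (simp add: sum.If_cases Int_absorb1)
  finally show ?thesis using S by simp
qed

lemma rho_sum_dA_y_le:
  "rho * (\<Sum>v\<in>A. real (dA v) * y v) \<le> 4 * (\<Sum>v\<in>A. real (dA v)) + 3 * (\<Sum>w\<in>B. real (dA w) * y w)"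
proof -
  have "real (dA v) * (rho * y v) \<le> 4 * real (dA v) + 3 * (\<Sum>w\<in>neighbours V E v \<inter> B. y w)"
    if v: "v \<in> A" for v
  proof -
    define Y where "Y = (\<Sum>w\<in>neighbours V E v \<inter> B. y w)"
    have "0 \<le> Y" unfolding Y_def by (rule sum_y_nonneg) auto
    have d3: "real (dA v) \<le> 3" using dA_le_cover[OF v] by (simp split: if_splits)
    have "rho * y v \<le> 1 + real (dA v) + Y"
      using eigen_A[OF v] sum_y_le_card[of "neighbours V E v \<inter> A"] A_subset unfolding Y_def by fastforce
    then have "real (dA v) * (rho * y v) \<le> real (dA v) * (1 + real (dA v) + Y)" by (rule mult_left_mono) simp
    also have "\<dots> \<le> 4 * real (dA v) + 3 * Y"
      using d3 \<open>0 \<le> Y\<close> mult_right_mono[OF d3, of "real (dA v)"] mult_right_mono[OF d3 \<open>0 \<le> Y\<close>]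
      by (simp add: algebra_simps)
    finally show ?thesis unfolding Y_def .
  qed
  then have "rho * (\<Sum>v\<in>A. real (dA v) * y v)
      \<le> (\<Sum>v\<in>A. 4 * real (dA v) + 3 * (\<Sum>w\<in>neighbours V E v \<inter> B. y w))"
    by (simp add: sum_distrib_left algebra_simps sum_mono)
  also have "\<dots> = 4 * (\<Sum>v\<in>A. real (dA v)) + 3 * (\<Sum>w\<in>B. real (dA w) * y w)"
    by (simp add: sum.distrib sum_distrib_left sum_neighbours_swap[OF sg A_subset] mult.left_commute)
  finally show ?thesis .
qed

lemma sum_dB_le_4: "(\<Sum>w\<in>B. dB w) \<le> 4"
proof -
  have "real (\<Sum>w\<in>B. dB w) < 5" using excess_crude sum_dA_le_12 rho_ge by simp
  then show ?thesis by linarith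
qed

lemma B_vertex_bound:
  assumes w: "w \<in> B"
  shows "0 \<le> rho * (real (dA w) - real (dA w) * y w) - 3 * (real (dA w) * y w) + rho * real (dB w) / 2"
proof -
  define Z where "Z = rho * y w"
  have "dB w \<le> 2" using dB_le_half_sum_dB[OF w] sum_dB_le_4 by (simp add: of_nat_sum[symmetric] del: of_nat_sum)
  moreover have "dA w \<le> 2" if "1 \<le> dB w"
  proof -
    have "6 < (\<Sum>v\<in>A. real (dA v))"
      using dB_le_half_sum_dB[OF w] that excess_crude rho_ge by simp
    then show ?thesis using dA_le_3[OF w] sum_dA_le_6[OF w] by fastforce
  qed
  moreover have "0 \<le> Z" unfolding Z_def using y_bounds w rho_ge by auto
  ultimately have "0 \<le> dA w * (rho * rho - rho * Z - 3 * Z) + dB w * (rho * rho) / 2"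
    using B_vertex_arith[OF dA_le_3[OF w]] rho_y_B_le[OF w] rho_ge unfolding Z_def by auto
  also have "\<dots> = rho * (rho * (real (dA w) - real (dA w) * y w) - 3 * (real (dA w) * y w) + rho * real (dB w) / 2)"
    unfolding Z_def by (simp add: algebra_simps)
  finally show ?thesis using rho_ge by (simp add: zero_le_mult_iff)
qed

lemma small_cover_impossible: False
proof -
  define sA where "sA = (\<Sum>v\<in>A. real (dA v))"
  define tA where "tA = (\<Sum>v\<in>A. real (dA v) * y v)"
  define sAB where "sAB = (\<Sum>w\<in>B. real (dA w))"
  define tAB where "tAB = (\<Sum>w\<in>B. real (dA w) * y w)"
  define sB where "sB = (\<Sum>w\<in>B. real (dB w))"
  have "0 \<le> (\<Sum>w\<in>B. rho * (real (dA w) - real (dA w) * y w) - 3 * (real (dA w) * y w) + rho * real (dB w) / 2)"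
    using B_vertex_bound by (intro sum_nonneg) auto
  then have B_part: "0 \<le> rho * (sAB - tAB) - 3 * tAB + rho * sB / 2"
    unfolding sAB_def tAB_def sB_def
    by (simp add: sum.distrib sum_subtractf sum_distrib_left sum_divide_distrib algebra_simps)
  have "rho * (rho + sA / 2 - tA + (sAB - tAB) + sB / 2) \<le> rho * (3/2)"
    using excess_lt rho_ge unfolding sA_def tA_def sAB_def tAB_def sB_def by (intro mult_left_mono) auto
  then have "rho * rho + rho * sA / 2 - 4 * sA \<le> 3/2 * rho"
    using rho_sum_dA_y_le B_part unfolding sA_def tA_def tAB_def by (simp add: algebra_simps)
  moreover have "0 \<le> sA" "sA \<le> 12" using sum_dA_le_12 unfolding sA_def by (simp_all add: sum_nonneg)
  moreover have "26/5 * rho \<le> rho * rho" using rho_ge by (intro mult_right_mono) auto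
  ultimately show False
  proof (cases "8 \<le> rho")
    case True
    then have "0 \<le> sA * (rho / 2 - 4)" using \<open>0 \<le> sA\<close> by simp
    moreover have "8 * rho \<le> rho * rho" using True by (intro mult_right_mono) auto
    ultimately show False using \<open>rho * rho + rho * sA / 2 - 4 * sA \<le> 3/2 * rho\<close> True
      by (simp add: algebra_simps)
  next
    case False
    then have "12 * (rho / 2 - 4) \<le> sA * (rho / 2 - 4)" using \<open>sA \<le> 12\<close> by (intro mult_right_mono_neg) auto
    then show False using \<open>rho * rho + rho * sA / 2 - 4 * sA \<le> 3/2 * rho\<close> \<open>26/5 * rho \<le> rho * rho\<close> rho_ge
      by (simp add: algebra_simps)
  qed
qed

end

end

context fish_free_perron
begin

context
  fixes c assumes c: "c \<in> A" "2 \<le> dA c" and star: "\<forall>v\<in>A. \<forall>w\<in>A. E v w \<longrightarrow> v = c \<or> w = c"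
begin

abbreviation "L \<equiv> neighbours V E c \<inter> A"
abbreviation "A0 \<equiv> A - insert c L"

lemma c_notin_L: "c \<notin> L"
  using simple_graph_irrefl[OF sg] unfolding neighbours_def by auto

lemma finite_L: "finite L" and finite_A0: "finite A0"
  using finite_A by auto

lemma sum_A_star: "(\<Sum>v\<in>A. f v) = f c + (\<Sum>v\<in>L. f v) + (\<Sum>v\<in>A0. f v)"
proof -
  have "A - {c} = L \<union> A0" using c_notin_L by auto
  moreover have "sum f (L \<union> A0) = sum f L + sum f A0"
    by (rule sum.union_disjoint) (use finite_L finite_A0 in auto)
  ultimately show ?thesis using sum.remove[OF finite_A c(1), of f] by (simp add: add.assoc)
qed

lemma card_A_star: "card A = 1 + card L + card A0"
  using sum_A_star[of "\<lambda>_. 1::nat"] by simp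

lemma star_neighbours: "v \<in> A \<Longrightarrow> v \<noteq> c \<Longrightarrow> neighbours V E v \<inter> A = (if v \<in> L then {c} else {})"
  using star c A_subset simple_graph_sym[OF sg] unfolding neighbours_def by auto

lemma dA_L: assumes "v \<in> L" shows "dA v = 1"
proof -
  have "v \<noteq> c" using assms c_notin_L by auto
  then show ?thesis using star_neighbours[of v] assms by simp
qed

lemma dA_A0: "v \<in> A0 \<Longrightarrow> dA v = 0"
  using star_neighbours[of v] by auto

lemma sum_dA_star: "(\<Sum>v\<in>A. real (dA v)) = 2 * real (card L)"
proof -
  have "(\<Sum>v\<in>L. real (dA v)) = (\<Sum>v\<in>L. 1)" by (rule sum.cong) (simp_all add: dA_L)
  moreover have "(\<Sum>v\<in>A0. real (dA v)) = 0"
    by (rule sum.neutral) (use dA_A0 in fastforce)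
  ultimately show ?thesis using sum_A_star[of "\<lambda>v. real (dA v)"] by simp
qed

lemma sum_dA_y_star: "(\<Sum>v\<in>A. real (dA v) * y v) = real (card L) * y c + (\<Sum>v\<in>L. y v)"
proof -
  have "(\<Sum>v\<in>L. real (dA v) * y v) = (\<Sum>v\<in>L. y v)" by (rule sum.cong) (simp_all add: dA_L)
  moreover have "(\<Sum>v\<in>A0. real (dA v) * y v) = 0"
    by (rule sum.neutral) (use dA_A0 in fastforce)
  ultimately show ?thesis using sum_A_star[of "\<lambda>v. real (dA v) * y v"] by simp
qed

lemma rho_star: "rho = y c + (\<Sum>v\<in>L. y v) + (\<Sum>v\<in>A0. y v)"
  using rho_eq_sum_A sum_A_star by simp

lemma eigen_c: "rho * y c = 1 + (\<Sum>v\<in>L. y v) + (\<Sum>w\<in>neighbours V E c \<inter> B. y w)"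
  using eigen_A[OF c(1)] by simp

lemma excess_star:
  "real m - rho\<^sup>2 + rho = y c + (\<Sum>v\<in>A0. y v) + real (card L) * (1 - y c)
     + (((\<Sum>w\<in>B. real (dA w)) - (\<Sum>w\<in>B. real (dA w) * y w)) + (\<Sum>w\<in>B. real (dB w)) / 2)"
  using excess_eq unfolding sum_dA_star sum_dA_y_star by (simp add: rho_star algebra_simps)

lemma A0_and_B_small:
  "(\<Sum>v\<in>A0. y v) < 1/2"
  "((\<Sum>w\<in>B. real (dA w)) - (\<Sum>w\<in>B. real (dA w) * y w)) + (\<Sum>w\<in>B. real (dB w)) / 2 < 1/2"
proof -
  have "1 - y c \<le> real (card L) * (1 - y c)"
    using c y_bounds A_subset mult_right_mono[of 1 "real (card L)" "1 - y c"] by auto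
  moreover have "0 \<le> (\<Sum>v\<in>A0. y v)" by (rule sum_y_nonneg) (use A_subset in auto)
  moreover have "0 \<le> (\<Sum>w\<in>B. real (dB w))" by (simp add: sum_nonneg)
  ultimately show "(\<Sum>v\<in>A0. y v) < 1/2"
    "((\<Sum>w\<in>B. real (dA w)) - (\<Sum>w\<in>B. real (dA w) * y w)) + (\<Sum>w\<in>B. real (dB w)) / 2 < 1/2"
    using excess_star big sum_dA_y_le[of B] by auto
qed

lemma B_vertex_small: "w \<in> B \<Longrightarrow> real (dA w) * (1 - y w) + real (dB w) / 2 < 1/2"
proof -
  assume w: "w \<in> B"
  have "real (dA w) * (1 - y w) + real (dB w) / 2 \<le> (\<Sum>w\<in>B. real (dA w) * (1 - y w) + real (dB w) / 2)"
    by (rule member_le_sum[OF w _ finite_B]) (use y_bounds in auto)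
  also have "\<dots> = ((\<Sum>w\<in>B. real (dA w)) - (\<Sum>w\<in>B. real (dA w) * y w)) + (\<Sum>w\<in>B. real (dB w)) / 2"
    by (simp add: sum.distrib sum_subtractf sum_divide_distrib algebra_simps)
  finally show ?thesis using A0_and_B_small(2) by linarith
qed

lemma B_empty: "B = {}"
proof (rule ccontr)
  assume "B \<noteq> {}"
  then obtain w where w: "w \<in> B" by auto
  have small: "real (dA w) * (1 - y w) + real (dB w) / 2 < 1/2" by (rule B_vertex_small[OF w])
  have yw: "0 \<le> y w" "y w \<le> 1" using w y_bounds by auto
  have "0 \<le> real (dA w) * (1 - y w)" using yw by simp
  then have "real (dB w) < 1" using small by linarith
  then have dB0: "dB w = 0" by simp
  have dA0: "dA w = 0"
  proof (rule ccontr)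
    assume "dA w \<noteq> 0"
    then have "dA w = 1 \<or> dA w = 2 \<or> dA w = 3" using dA_le_3[OF w] by auto
    then have "rho / 2 \<le> real (dA w) * rho - real (dA w) * real (dA w)" using rho_ge by auto
    also have "\<dots> \<le> real (dA w) * rho - real (dA w) * (rho * y w)"
      using rho_y_B_le[OF w] dB0 by (simp add: mult_left_mono)
    also have "\<dots> = rho * (real (dA w) * (1 - y w))" by (simp add: algebra_simps)
    finally have "rho * (1/2) \<le> rho * (real (dA w) * (1 - y w))" by simp
    then have "1/2 \<le> real (dA w) * (1 - y w)" using rho_ge by (simp only: mult_le_cancel_left_pos)
    then show False using small dB0 by simp
  qed
  obtain x where "E w x" using ni w unfolding no_isolated_def by auto
  moreover have "\<not> E w u" using w simple_graph_sym[OF sg] unfolding neighbours_def by auto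
  ultimately show False
    using dA0 dB0 w finite_A finite_B simple_graph_edge_in[OF sg] unfolding neighbours_def by auto
qed

lemma rho_y_A0: "p \<in> A0 \<Longrightarrow> rho * y p = 1"
  using eigen_A[of p] star_neighbours[of p] B_empty by auto

lemma m_star: "m = 2 * card L + 1 + card A0"
proof -
  have "2 * real m = 2 * (1 + real (card L) + real (card A0)) + 2 * real (card L)"
    using twice_m_eq unfolding sum_dA_star card_A_star B_empty by simp
  then have "real m = real (2 * card L + 1 + card A0)" by simp
  then show ?thesis by (simp only: of_nat_eq_iff)
qed

lemma card_A0: "card A0 = 1"
proof (rule ccontr)
  define a where "a = real (card A0)"
  define k where "k = real (card L)"
  define T where "T = (\<Sum>v\<in>A0. y v)"
  define q where "q = 1 - y c"
  assume "card A0 \<noteq> 1"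
  moreover have "odd (card A0)" using evm m_star by simp
  moreover have "\<And>n::nat. n \<noteq> 1 \<Longrightarrow> odd n \<Longrightarrow> 3 \<le> n" by presburger
  ultimately have "3 \<le> card A0" by blast
  then have a3: "3 \<le> a" unfolding a_def by simp
  have k: "0 \<le> k" "2 \<le> k" using c(2) unfolding k_def by auto
  have q: "0 \<le> q" unfolding q_def using y_bounds c A_subset by auto
  have T: "0 \<le> T" unfolding T_def by (rule sum_y_nonneg) (use A_subset in auto)
  have "rho * T = (\<Sum>v\<in>A0. 1)" unfolding T_def sum_distrib_left by (rule sum.cong) (simp_all only: rho_y_A0)
  then have rT: "rho * T = a" unfolding a_def by simp
  have qT: "q * (rho + 1) = T" using rho_star eigen_c B_empty unfolding q_def T_def by (simp add: algebra_simps)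
  have ex: "real m - rho\<^sup>2 + rho = 1 + T + (k - 1) * q"
    using excess_star B_empty unfolding q_def T_def k_def by (simp add: algebra_simps)
  have "(T + (k - 1) * q) * (rho * (rho + 1)) < 1/2 * (rho * (rho + 1))"
    using ex big rho_ge by (intro mult_strict_right_mono) auto
  moreover have "(T + (k - 1) * q) * (rho * (rho + 1)) = (rho * T) * (rho + 1) + (k - 1) * (rho * (q * (rho + 1)))"
    by (simp add: algebra_simps)
  then have "(T + (k - 1) * q) * (rho * (rho + 1)) = a * (rho + 1) + (k - 1) * a" by (simp only: qT rT)
  ultimately have h1: "a * rho + a * k < (rho * rho + rho) / 2" by (simp add: algebra_simps)
  have "0 \<le> (k - 1) * q" using k q by simp
  then have "1 \<le> real m - rho\<^sup>2 + rho" using ex T by linarith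
  moreover have "real m = 2 * k + 1 + a" using m_star unfolding a_def k_def by simp
  ultimately have h2: "rho * rho \<le> 2 * k + a + rho" by (simp add: power2_eq_square)
  have h3: "3 * rho \<le> a * rho" "3 * k \<le> a * k" using a3 rho_ge k by (simp_all add: mult_right_mono)
  have "rho * T < rho * (1/2)"
    using A0_and_B_small(1) rho_ge unfolding T_def by (intro mult_strict_left_mono) auto
  then have h4: "a < rho / 2" using rT by simp
  have "3 * rho + 3 * k < k + a / 2 + rho" using h1 h2 h3 by argo
  then show False using h4 rho_ge k by linarith
qed

lemma star_graph_iso: "graph_iso V E (Sminus_V ((m + 4) div 2)) (Sminus_E ((m + 4) div 2))"
proof -
  obtain p where p: "A0 = {p}" using card_A0 by (auto simp: card_1_singleton_iff)
  have V: "V = insert u (insert c (insert p L))" using V_split B_empty c p by auto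
  have distinct: "u \<noteq> c" "u \<noteq> p" "c \<noteq> p" "u \<notin> L" "c \<notin> L" "p \<notin> L"
    using u_notin_A c_notin_L c p by auto
  have "E v w \<longleftrightarrow> (v = u \<and> w \<noteq> u) \<or> (w = u \<and> v \<noteq> u) \<or> (v = c \<and> w \<in> L) \<or> (w = c \<and> v \<in> L)"
    if "v \<in> V" "w \<in> V" for v w
  proof (cases "v = u \<or> w = u")
    case True
    then show ?thesis using that V_split B_empty simple_graph_sym[OF sg] simple_graph_irrefl[OF sg]
      unfolding neighbours_def by auto
  next
    case False
    then have "v \<in> A" "w \<in> A" using that V_split B_empty by auto
    then show ?thesis using False star simple_graph_sym[OF sg] unfolding neighbours_def by auto
  qed
  then have "graph_iso V E (Sminus_V (card L + 3)) (Sminus_E (card L + 3))"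
    by (intro graph_iso_SminusI[OF finite_L distinct V])
  moreover have "(m + 4) div 2 = card L + 3" using m_star card_A0 by simp
  ultimately show ?thesis by simp
qed

end

lemma graph_iso_Sminus: "graph_iso V E (Sminus_V ((m + 4) div 2)) (Sminus_E ((m + 4) div 2))"
proof -
  have nbA: "{w\<in>A. E v w} = neighbours V E v \<inter> A" for v using A_subset unfolding neighbours_def by auto
  have no_path_edge: "False" if "b \<in> A" "z \<in> A" "d \<in> A" "e \<in> A" "f \<in> A" "E b z" "E z d" "b \<noteq> d"
    "E e f" "e \<notin> {b, z, d}" "f \<notin> {b, z, d}" for b z d e f
    using no_fish_at_u[of b d z e f] that A_subset u_notin_A by blast
  show ?thesis
  proof (rule no_path_edge_cases[of E A, OF simple_graph_sym[OF sg] simple_graph_irrefl[OF sg] no_path_edge])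
    assume "\<forall>v\<in>A. card {w\<in>A. E v w} \<le> 1"
    then show ?thesis using not_matching unfolding nbA by simp
  next
    fix c assume "c \<in> A" "2 \<le> card {w\<in>A. E c w}" "\<forall>v\<in>A. \<forall>w\<in>A. E v w \<longrightarrow> v = c \<or> w = c"
    then show ?thesis using star_graph_iso unfolding nbA by simp
  next
    fix S assume "S \<subseteq> A" "finite S" "card S \<le> 4" "edges_within E A S"
    then show ?thesis using small_cover_impossible by blast
  qed
qed

end

theorem theorem1p1:
  fixes V :: "'a set" and E :: "'a \<Rightarrow> 'a \<Rightarrow> bool" and m :: nat
  assumes "simple_graph V E"
    and "fish_free V E"
    and "no_isolated V E"
    and "num_edges E = m"
    and "even m" and "m \<ge> 24"
  shows "spectral_radius V E \<le> rho' m \<and>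
         (spectral_radius V E = rho' m \<longleftrightarrow>
            graph_iso V E (Sminus_V ((m + 4) div 2)) (Sminus_E ((m + 4) div 2)))"
proof -
  define n where "n = (m + 4) div 2"
  have n: "3 \<le> n" "2 * n - 4 = m" unfolding n_def using assms(5,6) by auto
  have "V \<noteq> {}" using simple_graph_nonempty[OF assms(1)] assms(4,6) by simp
  then obtain u y where "u \<in> V" "y u = 1" "\<forall>v\<in>V. 0 \<le> y v \<and> y v \<le> 1"
    "\<forall>v\<in>V. (\<Sum>w\<in>neighbours V E v. y w) = spectral_radius V E * y v"
    using spectral_radius_normalised_eigenvector[OF assms(1)] by blast
  then have perron: "fish_free_perron V E m u y (spectral_radius V E)" if "rho' m \<le> spectral_radius V E"
    using that assms gap_above_rho'[of m] by unfold_locales auto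
  have "graph_iso V E (Sminus_V n) (Sminus_E n)" if "rho' m \<le> spectral_radius V E"
    using fish_free_perron.graph_iso_Sminus[OF perron[OF that]] unfolding n_def .
  moreover have "spectral_radius V E = rho' m" if "graph_iso V E (Sminus_V n) (Sminus_E n)"
    using spectral_radius_graph_iso[OF that] spectral_radius_Sminus[OF n(1)] n(2) by simp
  ultimately show ?thesis unfolding n_def by fastforce
qed

end
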